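(* Let $(X_i)_{i=1}^\infty$ be independent with $X_i\sim\mathrm{Exp}(i)$ and $M=\sup_{i\ge1}X_i$. Then for every integer $k\ge1$, $$ \begin{aligned} E(M^k)= k!(-1)^k\Bigg(&-6^k\Big(\frac{2\pi}{3\sqrt3}-1\Big)\binom{2k-2}{k-1} +\sum_{j=1}^{\lfloor k/2\rfloor}2^{k+1}\binom{2k-2j-1}{k-1}3^{k-2j}\zeta(2j)\big(1-2^{1-2j}\big)\\ &+\sum_{j=2}^{k}\binom{2k-j-1}{k-1}6^{k-j}\Big((-1)^j\big(\zeta(j,\tfrac13)-\zeta(j,\tfrac56)\big)+\zeta(j,\tfrac23)-\zeta(j,\tfrac16)+6^j\Big)\Bigg). \end{aligned} $$
   Context: $\mathrm{Exp}(\lambda)$ denotes the exponential distribution with rate $\lambda$ (density $\lambda e^{-\lambda x}$, $x\ge0$). $\zeta(s)$ is the Riemann zeta function and $\zeta(s,a)$ is Hurwitz's zeta function, defined for $\mathrm{Re}\,s>1$, $\mathrm{Re}\,a>0$ by $\zeta(s,a)=\sum_{m=0}^\infty (m+a)^{-s}$ (and by analytic continuation in $s$ elsewhere, with a single simple pole at $s=1$). *)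

theory Defs
  imports "HOL-Probability.Probability"
begin

text \<open>Hurwitz zeta function zeta(s,a) = sum_{m>=0} (m+a)^(-s), for integer s
  (only used for s >= 2, where the series converges and equals the analytic one).\<close>
definition hurwitz_zeta :: "nat \<Rightarrow> real \<Rightarrow> real" where
  "hurwitz_zeta s a = (\<Sum>m. 1 / (real m + a) ^ s)"

definition riemann_zeta :: "nat \<Rightarrow> real" where
  "riemann_zeta s = hurwitz_zeta s 1"

end

theory Submission
  imports Defs
begin

text \<open>By independence, \<open>P(M \<le> x) = \<Prod>\<^sub>i\<^sub>\<ge>\<^sub>1 (1 - e\<^sup>-\<^sup>i\<^sup>x)\<close> is Euler's function
  \<open>\<phi>(q) = \<Prod>\<^sub>k\<^sub>\<ge>\<^sub>1 (1 - q\<^sup>k)\<close> at \<open>q = e\<^sup>-\<^sup>x\<close>. Euler's pentagonal number theorem, derived from a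
  finite identity given by the q-binomial theorem, writes the tail as the alternating series
  \<open>1 - \<phi>(e\<^sup>-\<^sup>x) = \<Sum>\<^sub>j (-1)\<^sup>j (e\<^sup>-\<^sup>a\<^sup>x + e\<^sup>-\<^sup>b\<^sup>x)\<close> with the pentagonal numbers
  \<open>a = (j+1)(3j+2)/2\<close> and \<open>b = (j+1)(3j+4)/2\<close>. Integrating \<open>k x\<^sup>k\<^sup>-\<^sup>1\<close> against the tail term by
  term gives \<open>E(M\<^sup>k) = k! \<Sum>\<^sub>j (-1)\<^sup>j (a\<^sup>-\<^sup>k + b\<^sup>-\<^sup>k)\<close>. Finally \<open>1/a\<close> and \<open>1/b\<close> split into partial fractions
  over \<open>3j+2\<close>, \<open>3j+3\<close>, \<open>3j+4\<close>; expanding their \<open>k\<close>-th powers leaves alternating series of inverse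
  powers, which are differences of Hurwitz zeta values, except for the first powers, where the
  digamma reflection formula produces \<open>2\<pi>/(3\<surd>3)\<close>.\<close>

section \<open>q-Pochhammer symbols and Euler's pentagonal number theorem\<close>

definition qpoch :: "real \<Rightarrow> nat \<Rightarrow> real" where
  "qpoch q n = (\<Prod>k\<in>{1..n}. (1 - q^k))"

lemma qpoch_0[simp]: "qpoch q 0 = 1" unfolding qpoch_def by simp

lemma qpoch_Suc: "qpoch q (Suc n) = qpoch q n * (1 - q^(Suc n))"
  unfolding qpoch_def by (simp add: prod.cl_ivl_Suc)

lemma qpoch_pos: "0 \<le> q \<Longrightarrow> q < 1 \<Longrightarrow> qpoch q n > 0"
  unfolding qpoch_def by (intro prod_pos) (auto simp: power_less_one_iff power_le_one)

lemma qpoch_split: "m \<le> p \<Longrightarrow> qpoch Q p = qpoch Q m * (\<Prod>k\<in>{m<..p}. (1 - Q^k))"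
proof (induction p)
  case 0 then show ?case by simp
next
  case (Suc p)
  show ?case
  proof (cases "m = Suc p")
    case True then show ?thesis by simp
  next
    case False
    with Suc.prems have "m \<le> p" by simp
    moreover have "{m<..Suc p} = insert (Suc p) {m<..p}" using \<open>m \<le> p\<close> by auto
    ultimately show ?thesis using Suc.IH by (simp add: qpoch_Suc algebra_simps)
  qed
qed

lemma prod_lessThan_add: "(\<Prod>k<a+(b::nat). f k :: real) = (\<Prod>k<a. f k) * (\<Prod>l<b. f (a+l))"
  by (induction b) (simp_all add: algebra_simps)

lemma qpoch_triple: "qpoch q (3*n) = (\<Prod>r\<in>{1..n}. (1 - q^(3*r-1))) * (\<Prod>l<n. (1 - q^(3*l+1))) * qpoch (q^3) n"
proof (induction n)
  case 0 then show ?case by simp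
next
  case (Suc n)
  have l: "qpoch q (3 * Suc n) = qpoch q (3*n) * (1 - q^(3*n+1)) * (1 - q^(3*n+2)) * (1 - q^(3*n+3))"
  proof -
    have "3 * Suc n = Suc (Suc (Suc (3*n)))" by simp
    then show ?thesis by (simp only: qpoch_Suc) (simp add: numeral_3_eq_3 numeral_2_eq_2)
  qed
  have h1: "(\<Prod>r\<in>{1..Suc n}. (1 - q^(3*r-1))) = (\<Prod>r\<in>{1..n}. (1 - q^(3*r-1))) * (1 - q^(3*n+2))"
    by (simp add: prod.cl_ivl_Suc)
  have h2: "(\<Prod>l<Suc n. (1 - q^(3*l+1))) = (\<Prod>l<n. (1 - q^(3*l+1))) * (1 - q^(3*n+1))"
    by simp
  have h3: "qpoch (q^3) (Suc n) = qpoch (q^3) n * (1 - q^(3*n+3))"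
    by (simp add: qpoch_Suc power_mult[symmetric] power_add)
  show ?case unfolding l h1 h2 h3 Suc by (simp only: mult_ac)
qed

lemma qpoch_convergent:
  assumes q: "0 \<le> q" "q < 1"
  shows "qpoch q \<longlonglongrightarrow> lim (qpoch q)"
proof -
  have dec: "qpoch q (Suc n) \<le> qpoch q n" for n
    using qpoch_pos[OF q, of n] q by (simp add: qpoch_Suc mult_left_le)
  have le1: "norm (qpoch q n) \<le> 1" for n
  proof -
    have "qpoch q n \<le> 1"
    proof (induction n)
      case (Suc n) with dec[of n] show ?case by simp
    qed simp
    then show "norm (qpoch q n) \<le> 1" using qpoch_pos[OF q, of n] by simp
  qed
  have "Bseq (qpoch q)" using le1 by (intro BseqI[where K=1]) auto
  moreover have "monoseq (qpoch q)" using dec by (intro decseq_imp_monoseq) (simp add: decseq_SucI)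
  ultimately have "convergent (qpoch q)" by (rule Bseq_monoseq_convergent)
  then show ?thesis by (simp add: convergent_LIMSEQ_iff)
qed

definition euler_function :: "real \<Rightarrow> real" where "euler_function q = lim (qpoch q)"

definition triangular :: "nat \<Rightarrow> nat" where
  "triangular i = (\<Sum>l<i. l)"

lemma triangular_Suc: "triangular (Suc i) = triangular i + i" unfolding triangular_def by simp

lemma real_triangular: "real (triangular i) = real i * (real i - 1) / 2"
  by (induction i) (auto simp: triangular_def field_simps)

lemma sum_atLeast1_triangular: "(\<Sum>r\<in>{1..n}. r) = triangular (Suc n)"
  by (induction n) (auto simp: triangular_def)

lemma triangular_exponent_plus: "3*triangular(n+i) + (n+i) + 3*triangular(n+1) = 3*triangular i + i + 3*n*(n+i) + n"
proof -
  have "real (3*triangular(n+i) + (n+i) + 3*triangular(n+1)) = real (3*triangular i + i + 3*n*(n+i) + n)"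
    by (simp add: real_triangular field_simps)
  then show ?thesis by (simp only: of_nat_eq_iff)
qed

lemma triangular_exponent_minus: "i \<le> n \<Longrightarrow> 3*triangular(n-i) + (n-i) + 3*triangular(n+1) = 3*triangular i + 2*i + 3*n*(n-i) + n"
proof -
  assume "i \<le> n"
  then have "real (3*triangular(n-i) + (n-i) + 3*triangular(n+1)) = real (3*triangular i + 2*i + 3*n*(n-i) + n)"
    by (simp add: real_triangular of_nat_diff field_simps)
  then show ?thesis by (simp only: of_nat_eq_iff)
qed

fun qbinomial :: "real \<Rightarrow> nat \<Rightarrow> nat \<Rightarrow> real" where
  "qbinomial Q 0 j = (if j = 0 then 1 else 0)"
| "qbinomial Q (Suc m) 0 = 1"
| "qbinomial Q (Suc m) (Suc j) = qbinomial Q m j * Q^(m - j) + qbinomial Q m (Suc j)"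

lemma qbinomial_eq_0: "j > m \<Longrightarrow> qbinomial Q m j = 0"
proof (induction m arbitrary: j)
  case 0 then show ?case by simp
next
  case (Suc m)
  then obtain j' where "j = Suc j'" by (cases j) auto
  with Suc show ?case by simp
qed

lemma qbinomial_0_right[simp]: "qbinomial Q m 0 = 1" by (cases m) auto

lemma q_binomial_theorem:
  "(\<Prod>k<m. (1 + z*Q^k)) = (\<Sum>j\<le>m. Q^(triangular j) * qbinomial Q m j * z^j)"
proof (induction m)
  case 0 then show ?case by (simp add: triangular_def)
next
  case (Suc m)
  have s1: "(\<Sum>j\<le>Suc m. Q^(triangular j) * qbinomial Q (Suc m) j * z^j)
      = 1 + (\<Sum>j\<le>m. Q^(triangular (Suc j)) * qbinomial Q (Suc m) (Suc j) * z^(Suc j))"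
    by (subst sum.atMost_Suc_shift) (simp add: triangular_def)
  have s2: "(\<Sum>j\<le>m. Q^(triangular (Suc j)) * qbinomial Q (Suc m) (Suc j) * z^(Suc j))
      = (\<Sum>j\<le>m. (z * Q^m) * (Q^(triangular j) * qbinomial Q m j * z^j))
        + (\<Sum>j\<le>m. Q^(triangular (Suc j)) * qbinomial Q m (Suc j) * z^(Suc j))"
  proof -
    have "Q^(triangular (Suc j)) * qbinomial Q (Suc m) (Suc j) * z^(Suc j)
       = (z * Q^m) * (Q^(triangular j) * qbinomial Q m j * z^j) + Q^(triangular (Suc j)) * qbinomial Q m (Suc j) * z^(Suc j)"
      if "j \<le> m" for j
    proof -
      have "Q^(triangular (Suc j)) * Q^(m-j) = Q^m * Q^(triangular j)"
        using that by (simp add: triangular_Suc power_add[symmetric] add.commute)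
      then show ?thesis by (simp add: algebra_simps)
    qed
    then show ?thesis by (simp add: sum.distrib)
  qed
  have s3: "1 + (\<Sum>j\<le>m. Q^(triangular (Suc j)) * qbinomial Q m (Suc j) * z^(Suc j))
      = (\<Sum>j\<le>Suc m. Q^(triangular j) * qbinomial Q m j * z^j)"
    by (subst sum.atMost_Suc_shift) (simp add: triangular_def)
  have s4: "(\<Sum>j\<le>Suc m. Q^(triangular j) * qbinomial Q m j * z^j) = (\<Sum>j\<le>m. Q^(triangular j) * qbinomial Q m j * z^j)"
    by (simp add: qbinomial_eq_0)
  have "(\<Sum>j\<le>Suc m. Q^(triangular j) * qbinomial Q (Suc m) j * z^j)
      = (\<Sum>j\<le>m. (z * Q^m) * (Q^(triangular j) * qbinomial Q m j * z^j)) + (\<Sum>j\<le>m. Q^(triangular j) * qbinomial Q m j * z^j)"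
    using s1 s2 s3 s4 by linarith
  then have "(\<Sum>j\<le>Suc m. Q^(triangular j) * qbinomial Q (Suc m) j * z^j)
      = (z * Q^m) * (\<Sum>j\<le>m. Q^(triangular j) * qbinomial Q m j * z^j) + (\<Sum>j\<le>m. Q^(triangular j) * qbinomial Q m j * z^j)"
    by (simp only: sum_distrib_left)
  then show ?case using Suc by (simp add: algebra_simps)
qed

lemma qbinomial_qpoch:
  "j \<le> m \<Longrightarrow> qbinomial Q m j * qpoch Q j * qpoch Q (m-j) = qpoch Q m"
proof (induction m arbitrary: j)
  case 0 then show ?case by simp
next
  case (Suc m)
  show ?case
  proof (cases j)
    case 0 then show ?thesis by simp
  next
    case (Suc j')
    with Suc.prems have j': "j' \<le> m" by simp
    have A: "qbinomial Q m j' * qpoch Q (Suc j') * qpoch Q (m - j') = qpoch Q m * (1 - Q^(Suc j'))"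
      using Suc.IH[OF j'] by (simp add: qpoch_Suc algebra_simps)
    have B: "qbinomial Q m (Suc j') * qpoch Q (Suc j') * qpoch Q (m - j') = qpoch Q m * (1 - Q^(m - j'))"
    proof (cases "j' = m")
      case True then show ?thesis by (simp add: qbinomial_eq_0)
    next
      case False
      then have le: "Suc j' \<le> m" using j' by simp
      then have "m - j' = Suc (m - Suc j')" by simp
      then have e: "qpoch Q (m - j') = qpoch Q (m - Suc j') * (1 - Q^(m - j'))" by (simp add: qpoch_Suc)
      have "qbinomial Q m (Suc j') * qpoch Q (Suc j') * qpoch Q (m - j')
         = (qbinomial Q m (Suc j') * qpoch Q (Suc j') * qpoch Q (m - Suc j')) * (1 - Q^(m - j'))"
        unfolding e by (simp only: mult.assoc)
      also have "\<dots> = qpoch Q m * (1 - Q^(m - j'))" using Suc.IH[OF le] by simp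
      finally show ?thesis .
    qed
    have "qbinomial Q (Suc m) j * qpoch Q j * qpoch Q (Suc m - j)
       = Q^(m-j') * (qbinomial Q m j' * qpoch Q (Suc j') * qpoch Q (m - j')) + qbinomial Q m (Suc j') * qpoch Q (Suc j') * qpoch Q (m - j')"
      using Suc by (simp add: algebra_simps)
    also have "\<dots> = qpoch Q m * (1 - Q^(Suc m))"
      unfolding A B using j' by (simp add: algebra_simps power_add[symmetric])
    finally show ?thesis by (simp add: qpoch_Suc)
  qed
qed

lemma qbinomial_symmetric:
  assumes q: "0 \<le> Q" "Q < 1" and i: "i \<le> n"
  shows "qbinomial Q (2*n) (n-i) = qbinomial Q (2*n) (n+i)"
proof -
  have a: "qbinomial Q (2*n) (n+i) * qpoch Q (n+i) * qpoch Q (n-i) = qpoch Q (2*n)"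
    using qbinomial_qpoch[of "n+i" "2*n" Q] i by (simp add: mult_2)
  have b: "qbinomial Q (2*n) (n-i) * qpoch Q (n-i) * qpoch Q (n+i) = qpoch Q (2*n)"
    using qbinomial_qpoch[of "n-i" "2*n" Q] i by (simp add: mult_2)
  have p: "qpoch Q (n-i) * qpoch Q (n+i) \<noteq> 0" using qpoch_pos[OF q, of "n-i"] qpoch_pos[OF q, of "n+i"] by simp
  have "(qpoch Q (n-i) * qpoch Q (n+i)) * qbinomial Q (2*n) (n-i) = (qpoch Q (n-i) * qpoch Q (n+i)) * qbinomial Q (2*n) (n+i)"
    using a b by (simp add: algebra_simps)
  with p show ?thesis by simp
qed

text \<open>The pentagonal series \<open>\<Sum>\<^sub>i\<^sub>\<in>\<^sub>\<int> (-1)\<^sup>i q\<^sup>i\<^sup>(\<^sup>3\<^sup>i\<^sup>-\<^sup>1\<^sup>)\<^sup>/\<^sup>2\<close> with the terms for \<open>\<plusminus>i\<close> combined;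
  note \<open>3 * triangular i + i = i(3i-1)/2\<close>.\<close>

definition pentagonal_term :: "real \<Rightarrow> nat \<Rightarrow> real" where
  "pentagonal_term q i = (if i = 0 then 1 else (-1)^i * (q^(3*triangular i + i) + q^(3*triangular i + 2*i)))"

lemma sum_split_center:
  "(\<Sum>j\<le>2*n. F j) = (\<Sum>i\<le>n. F (n+i)) + (\<Sum>i\<in>{1..n}. F (n-i))" for n :: nat and F :: "nat \<Rightarrow> real"
proof -
  have "{..2*n} = {..<n} \<union> {n..2*n}" by auto
  then have "(\<Sum>j\<le>2*n. F j) = (\<Sum>j<n. F j) + (\<Sum>j\<in>{n..2*n}. F j)"
    by (simp only:) (rule sum.union_disjoint, auto)
  also have "(\<Sum>j\<in>{n..2*n}. F j) = (\<Sum>i\<le>n. F (n+i))"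
    by (rule sum.reindex_bij_witness[where j="\<lambda>j. j - n" and i="\<lambda>i. n+i"]) auto
  also have "(\<Sum>j<n. F j) = (\<Sum>i\<in>{1..n}. F (n-i))"
    by (rule sum.reindex_bij_witness[where i="\<lambda>j. n - j" and j="\<lambda>i. n-i"]) auto
  finally show ?thesis by simp
qed

text \<open>The q-binomial theorem with \<open>Q = q\<^sup>3\<close> and \<open>z = -q/Q\<^sup>n\<close> gives a finite form of the pentagonal
  number theorem; the product side is computed first.\<close>

lemma qbinomial_product_pentagonal_factors:
  fixes q Q :: real
  assumes q: "0 < q" and Q: "Q = q^3"
  shows "(\<Prod>k<2*n. (1 - q / Q^n * Q^k))
    = (-1)^n * q^n / Q^(triangular (Suc n)) * ((\<Prod>r\<in>{1..n}. (1 - q^(3*r-1))) * (\<Prod>l<n. (1 - q^(3*l+1))))"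
proof -
  have Qpos: "0 < Q" using q Q by simp
  have QQ: "Q^x = q^(3*x)" for x unfolding Q by (simp add: power_mult)
  have upper: "(\<Prod>l<n. (1 - q / Q^n * Q^(n+l))) = (\<Prod>l<n. (1 - q^(3*l+1)))"
  proof (rule prod.cong[OF refl])
    fix l
    have "q / Q^n * Q^(n+l) = q * Q^l" using Qpos by (simp add: power_add)
    then show "1 - q / Q^n * Q^(n+l) = 1 - q^(3*l+1)" by (simp add: QQ)
  qed
  have lower: "(\<Prod>k<n. (1 - q / Q^n * Q^k)) = (\<Prod>r\<in>{1..n}. (-q/Q^r) * (1 - q^(3*r-1)))"
  proof -
    have "(\<Prod>k<n. (1 - q / Q^n * Q^k)) = (\<Prod>r\<in>{1..n}. (1 - q / Q^n * Q^(n-r)))"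
      by (rule prod.reindex_bij_witness[where j="\<lambda>k. n - k" and i="\<lambda>r. n - r"]) auto
    also have "\<dots> = (\<Prod>r\<in>{1..n}. (-q/Q^r) * (1 - q^(3*r-1)))"
    proof (rule prod.cong[OF refl])
      fix r assume r: "r \<in> {1..n}"
      have e1: "Q^n = Q^(n-r) * Q^r" using r by (simp add: power_add[symmetric])
      have e2: "q * q^(3*r-1) = Q^r" using r by (simp add: QQ power_Suc[symmetric])
      have "q / Q^n * Q^(n-r) = q/Q^r" unfolding e1 using Qpos by (simp add: field_simps)
      moreover have "(-q/Q^r) * (1 - q^(3*r-1)) = -q/Q^r + 1"
        using e2 Qpos by (simp add: field_simps)
      ultimately show "1 - q / Q^n * Q^(n-r) = (-q/Q^r) * (1 - q^(3*r-1))" by simp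
    qed
    finally show ?thesis .
  qed
  have prefactor: "(\<Prod>r\<in>{1..n}. (-q/Q^r)) = (-1)^n * q^n / Q^(triangular (Suc n))"
  proof -
    have "(\<Prod>r\<in>{1..n}. (-q/Q^r)) = (\<Prod>r\<in>{1..n}. -q) / (\<Prod>r\<in>{1..n}. Q^r)"
      by (rule prod_dividef)
    also have "(\<Prod>r\<in>{1..n}. Q^r) = Q^(triangular (Suc n))"
      unfolding sum_atLeast1_triangular[symmetric] by (rule power_sum[symmetric])
    also have "(\<Prod>r\<in>{1..n}. -q) = (-1)^n * q^n" by (subst prod_constant) (simp add: power_minus[of q n])
    finally show ?thesis .
  qed
  have "(\<Prod>k<2*n. (1 - q / Q^n * Q^k)) = (\<Prod>k<n. (1 - q / Q^n * Q^k)) * (\<Prod>l<n. (1 - q / Q^n * Q^(n+l)))"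
    using prod_lessThan_add[where a=n and b=n and f="\<lambda>k. 1 - q / Q^n * Q^k"] by (simp add: mult_2)
  also have "\<dots> = (-1)^n * q^n / Q^(triangular (Suc n)) * (\<Prod>r\<in>{1..n}. (1 - q^(3*r-1))) * (\<Prod>l<n. (1 - q^(3*l+1)))"
    unfolding upper lower prod.distrib prefactor by simp
  finally show ?thesis by simp
qed

text \<open>The central coefficients of the q-binomial expansion, read from the middle outwards,
  are exactly the terms of the pentagonal series.\<close>
lemma qbinomial_product_pentagonal_sum:
  fixes q Q :: real
  assumes q: "0 < q" "q < 1" and Q: "Q = q^3"
  shows "(\<Prod>k<2*n. (1 - q / Q^n * Q^k))
    = (-1)^n * q^n / Q^(triangular (Suc n)) * (\<Sum>i\<le>n. pentagonal_term q i * qbinomial Q (2*n) (n+i))"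
proof -
  have Qb: "0 < Q" "Q < 1" using q unfolding Q by (auto simp: power_less_one_iff)
  have QQ: "Q^x = q^(3*x)" for x unfolding Q by (simp add: power_mult)
  define z where "z = -(q / Q^n)"
  define D where "D = (-1)^n * q^n / Q^(triangular (Suc n))"
  define qb where "qb j = qbinomial Q (2*n) j" for j
  define T where "T j = Q^(triangular j) * qb j * z^j" for j
  have zj: "z^j = (-1)^j * q^j / Q^(n*j)" for j
    unfolding z_def by (simp only: power_minus[of "q/Q^n"] power_divide power_mult[symmetric]) simp
  have T_plus: "T (n+i) = D * ((-1)^i * q^(3*triangular i + i) * qb (n+i))" for i
  proof -
    have key: "Q^(triangular (n+i)) * q^(n+i) * Q^(triangular (Suc n)) = q^n * q^(3*triangular i + i) * Q^(n*(n+i))"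
      unfolding QQ power_add[symmetric] using triangular_exponent_plus[of n i] by (simp add: algebra_simps)
    have s: "(-1::real)^(n+i) = (-1)^n * (-1)^i" by (simp add: power_add)
    show ?thesis unfolding T_def zj D_def s using Qb q key by (simp add: field_simps)
  qed
  have T_minus: "T (n-i) = D * ((-1)^i * q^(3*triangular i + 2*i) * qb (n+i))" if i: "i \<le> n" for i
  proof -
    have key: "Q^(triangular (n-i)) * q^(n-i) * Q^(triangular (Suc n)) = q^n * q^(3*triangular i + 2*i) * Q^(n*(n-i))"
      unfolding QQ power_add[symmetric] using triangular_exponent_minus[OF i] by (simp add: algebra_simps)
    have s: "(-1::real)^n = (-1)^(n-i) * (-1)^i" using i by (simp add: power_add[symmetric])
    have sym: "qb (n-i) = qb (n+i)" unfolding qb_def using qbinomial_symmetric[OF less_imp_le[OF Qb(1)] Qb(2) i] .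
    show ?thesis unfolding T_def zj D_def s sym using Qb q key by (simp add: field_simps)
  qed
  have pent_sum: "(\<Sum>i\<le>n. pentagonal_term q i * qb (n+i))
      = (\<Sum>i\<le>n. (-1)^i * q^(3*triangular i + i) * qb (n+i)) + (\<Sum>i\<in>{1..n}. (-1)^i * q^(3*triangular i + 2*i) * qb (n+i))"
  proof -
    have "(\<Sum>i\<le>n. pentagonal_term q i * qb (n+i)) = pentagonal_term q 0 * qb n + (\<Sum>i\<in>{1..n}. pentagonal_term q i * qb (n+i))"
      by (simp add: atMost_atLeast0 sum.atLeast_Suc_atMost)
    moreover have "(\<Sum>i\<le>n. (-1)^i * q^(3*triangular i + i) * qb (n+i)) = qb n + (\<Sum>i\<in>{1..n}. (-1)^i * q^(3*triangular i + i) * qb (n+i))"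
      by (simp add: atMost_atLeast0 sum.atLeast_Suc_atMost triangular_def)
    moreover have "(\<Sum>i\<in>{1..n}. pentagonal_term q i * qb (n+i)) = (\<Sum>i\<in>{1..n}. (-1)^i * q^(3*triangular i + i) * qb (n+i)) + (\<Sum>i\<in>{1..n}. (-1)^i * q^(3*triangular i + 2*i) * qb (n+i))"
      by (simp add: pentagonal_term_def sum.distrib[symmetric] algebra_simps)
    ultimately show ?thesis by (simp add: pentagonal_term_def)
  qed
  have "(\<Prod>k<2*n. (1 - q / Q^n * Q^k)) = (\<Prod>k<2*n. (1 + z*Q^k))" unfolding z_def by simp
  also have "\<dots> = (\<Sum>j\<le>2*n. T j)"
    unfolding T_def qb_def by (rule q_binomial_theorem)
  also have "\<dots> = (\<Sum>i\<le>n. T (n+i)) + (\<Sum>i\<in>{1..n}. T (n-i))" by (rule sum_split_center)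
  also have "\<dots> = D * (\<Sum>i\<le>n. pentagonal_term q i * qb (n+i))"
    unfolding pent_sum by (simp add: T_plus T_minus sum_distrib_left distrib_left)
  finally show ?thesis unfolding D_def qb_def .
qed

lemma pentagonal_finite:
  assumes q: "0 < q" "q < 1"
  shows "qpoch q (3*n) = (\<Sum>i\<le>n. pentagonal_term q i * (qbinomial (q^3) (2*n) (n+i) * qpoch (q^3) n))"
proof -
  let ?D = "(-1)^n * q^n / (q^3)^(triangular (Suc n)) :: real"
  have eq: "?D * ((\<Prod>r\<in>{1..n}. (1 - q^(3*r-1))) * (\<Prod>l<n. (1 - q^(3*l+1))))
      = ?D * (\<Sum>i\<le>n. pentagonal_term q i * qbinomial (q^3) (2*n) (n+i))"
    using qbinomial_product_pentagonal_factors[OF q(1) refl, of n]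
      qbinomial_product_pentagonal_sum[OF q refl, of n] by simp
  have D: "?D \<noteq> 0" using q by simp
  from eq have factors_eq: "(\<Prod>r\<in>{1..n}. (1 - q^(3*r-1))) * (\<Prod>l<n. (1 - q^(3*l+1)))
      = (\<Sum>i\<le>n. pentagonal_term q i * qbinomial (q^3) (2*n) (n+i))"
    unfolding mult_left_cancel[OF D] .
  have "qpoch q (3*n) = (\<Prod>r\<in>{1..n}. (1 - q^(3*r-1))) * (\<Prod>l<n. (1 - q^(3*l+1))) * qpoch (q^3) n"
    by (rule qpoch_triple)
  also have "\<dots> = (\<Sum>i\<le>n. pentagonal_term q i * qbinomial (q^3) (2*n) (n+i)) * qpoch (q^3) n"
    unfolding factors_eq ..
  finally show ?thesis by (simp add: sum_distrib_right mult.assoc)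
qed

lemma weierstrass_product_inequality:
  fixes a :: "nat \<Rightarrow> real"
  assumes "finite A" "\<And>k. k \<in> A \<Longrightarrow> 0 \<le> a k \<and> a k \<le> 1"
  shows "1 - (\<Sum>k\<in>A. a k) \<le> (\<Prod>k\<in>A. (1 - a k)) \<and> (\<Prod>k\<in>A. (1 - a k)) \<le> 1 \<and> 0 \<le> (\<Prod>k\<in>A. (1 - a k))"
  using assms
proof (induction A rule: finite_induct)
  case empty then show ?case by simp
next
  case (insert x F)
  let ?P = "\<Prod>k\<in>F. (1 - a k)" and ?S = "\<Sum>k\<in>F. a k"
  have IH: "1 - ?S \<le> ?P" "?P \<le> 1" "0 \<le> ?P" using insert by auto
  have ax: "0 \<le> a x" "a x \<le> 1" using insert by auto
  have "0 \<le> a x * ?P" using ax IH by simp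
  moreover have "a x * ?P \<le> a x" using ax IH mult_left_le by blast
  ultimately have "1 - (a x + ?S) \<le> (1 - a x) * ?P"
    using IH by (simp add: algebra_simps)
  moreover have "(1 - a x) * ?P \<le> 1" using ax IH by (simp add: mult_le_one)
  moreover have "0 \<le> (1 - a x) * ?P" using ax IH by simp
  ultimately show ?case using insert by simp
qed

lemma sum_power_greaterThan_le:
  fixes Q :: real assumes Q: "0 \<le> Q" "Q < 1"
  shows "(\<Sum>k\<in>{a<..b}. Q^k) \<le> Q^(Suc a) / (1 - Q)"
proof (cases "a < b")
  case True
  have e: "{a<..b} = {Suc a..b}" by auto
  have "(1 - Q) * (\<Sum>k\<in>{Suc a..b}. Q^k) = Q^(Suc a) - Q^(Suc b)"
    using True by (intro sum_gp_multiplied) simp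
  also have "\<dots> \<le> Q^(Suc a)" using Q by simp
  finally show ?thesis unfolding e using Q by (simp add: field_simps)
next
  case False
  then have "{a<..b} = {}" by auto
  then show ?thesis using Q by simp
qed

lemma qbinomial_central_qpoch:
  assumes Q: "0 \<le> Q" "Q < 1" and i: "i \<le> n"
  shows "qbinomial Q (2*n) (n+i) * qpoch Q n = (\<Prod>k\<in>{n+i<..2*n}. (1 - Q^k)) * (\<Prod>k\<in>{n-i<..n}. (1 - Q^k))"
proof -
  define P1 where "P1 = (\<Prod>k\<in>{n+i<..2*n}. (1 - Q^k))"
  define P2 where "P2 = (\<Prod>k\<in>{n-i<..n}. (1 - Q^k))"
  have pos: "qpoch Q (n+i) > 0" "qpoch Q (n-i) > 0" using qpoch_pos Q by auto
  have r1: "qpoch Q (2*n) = qpoch Q (n+i) * P1" unfolding P1_def using i by (intro qpoch_split) simp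
  have r2: "qpoch Q n = qpoch Q (n-i) * P2" unfolding P2_def using i by (intro qpoch_split) simp
  have "qbinomial Q (2*n) (n+i) * qpoch Q (n+i) * qpoch Q (2*n - (n+i)) = qpoch Q (2*n)"
    using i by (intro qbinomial_qpoch) simp
  moreover have "2*n - (n+i) = n - i" by simp
  ultimately have "qbinomial Q (2*n) (n+i) * qpoch Q (n+i) * qpoch Q (n-i) = qpoch Q (n+i) * P1"
    using r1 by simp
  then have "qpoch Q (n+i) * qpoch Q (n-i) * (qbinomial Q (2*n) (n+i) * qpoch Q n)
      = qpoch Q (n+i) * qpoch Q (n-i) * (P1 * P2)"
    using r2 by (simp add: algebra_simps)
  then show ?thesis using pos unfolding P1_def P2_def by simp
qed

lemma abs_qbinomial_qpoch_minus_1_le: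
  assumes q: "0 < q" "q < 1" and i: "i \<le> n"
  shows "\<bar>qbinomial (q^3) (2*n) (n+i) * qpoch (q^3) n - 1\<bar> \<le> 2 * q^(n-i) / (1 - q)"
proof -
  define Q where "Q = (q^3::real)"
  have Q: "0 < Q" "Q < 1" "Q \<le> q" using q unfolding Q_def
    by (auto simp: power_less_one_iff intro: power_le_imp_le_exp order.trans[OF power_decreasing[of 1 3 q]])
  define P1 where "P1 = (\<Prod>k\<in>{n+i<..2*n}. (1 - Q^k))"
  define P2 where "P2 = (\<Prod>k\<in>{n-i<..n}. (1 - Q^k))"
  define S1 where "S1 = (\<Sum>k\<in>{n+i<..2*n}. Q^k)"
  define S2 where "S2 = (\<Sum>k\<in>{n-i<..n}. Q^k)"
  have a01: "0 \<le> Q^k \<and> Q^k \<le> 1" for k using Q by (simp add: power_le_one)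
  have w1: "1 - S1 \<le> P1" "P1 \<le> 1" "0 \<le> P1" unfolding P1_def S1_def using weierstrass_product_inequality[of "{n+i<..2*n}" "\<lambda>k. Q^k"] a01 by auto
  have w2: "1 - S2 \<le> P2" "P2 \<le> 1" "0 \<le> P2" unfolding P2_def S2_def using weierstrass_product_inequality[of "{n-i<..n}" "\<lambda>k. Q^k"] a01 by auto
  have cP: "qbinomial Q (2*n) (n+i) * qpoch Q n = P1 * P2"
    unfolding P1_def P2_def using Q i by (intro qbinomial_central_qpoch) auto
  have s1: "S1 \<le> Q^(Suc (n+i)) / (1-Q)" unfolding S1_def using Q by (intro sum_power_greaterThan_le) auto
  have s2: "S2 \<le> Q^(Suc (n-i)) / (1-Q)" unfolding S2_def using Q by (intro sum_power_greaterThan_le) auto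
  have "Q^(Suc (n+i)) \<le> Q^(Suc (n-i))" using Q by (intro power_decreasing) auto
  also have "\<dots> \<le> Q^(n-i)" using Q by (intro power_decreasing) auto
  also have "\<dots> \<le> q^(n-i)" using Q by (intro power_mono) auto
  finally have t1: "Q^(Suc (n+i)) \<le> q^(n-i)" .
  have "Q^(Suc (n-i)) \<le> Q^(n-i)" using Q by (intro power_decreasing) auto
  also have "\<dots> \<le> q^(n-i)" using Q by (intro power_mono) auto
  finally have t2: "Q^(Suc (n-i)) \<le> q^(n-i)" .
  have d: "1 / (1 - Q) \<le> 1 / (1 - q)" using Q q by (intro divide_left_mono) auto
  have "S1 \<le> q^(n-i) / (1-q)"
    using s1 t1 d Q q by (smt (verit) divide_right_mono frac_le zero_le_power)
  moreover have "S2 \<le> q^(n-i) / (1-q)"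
    using s2 t2 d Q q by (smt (verit) divide_right_mono frac_le zero_le_power)
  moreover have "P1 * P2 \<le> 1" using w1 w2 mult_le_one by blast
  moreover have "1 - S1 - S2 \<le> P1 * P2"
  proof -
    have "0 \<le> (1 - P1) * (1 - P2)" using w1 w2 by simp
    then show ?thesis using w1 w2 by (simp add: algebra_simps)
  qed
  ultimately show ?thesis unfolding cP Q_def[symmetric] by (simp add: abs_if)
qed

lemma abs_pentagonal_term_le: "0 \<le> q \<Longrightarrow> q \<le> 1 \<Longrightarrow> \<bar>pentagonal_term q i\<bar> \<le> 2 * q^i"
proof -
  assume q: "0 \<le> q" "q \<le> 1"
  show ?thesis
  proof (cases "i = 0")
    case True then show ?thesis by (simp add: pentagonal_term_def)
  next
    case False
    have "q^(3*triangular i + i) \<le> q^i" "q^(3*triangular i + 2*i) \<le> q^i" using q by (auto intro!: power_decreasing)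
    then show ?thesis using False q by (simp add: pentagonal_term_def abs_mult)
  qed
qed

text \<open>In the finite identity each weight \<open>qbinomial (q\<^sup>3) (2n) (n+i) * qpoch (q\<^sup>3) n\<close> differs
  from 1 by \<open>O(q\<^sup>n\<^sup>-\<^sup>i)\<close> while the \<open>i\<close>-th term is \<open>O(q\<^sup>i)\<close>, so the total error is \<open>O(n q\<^sup>n)\<close>.\<close>

theorem pentagonal_number_theorem:
  assumes q: "0 < q" "q < 1"
  shows "pentagonal_term q sums lim (qpoch q)"
proof -
  let ?L = "lim (qpoch q)"
  let ?c = "\<lambda>n i. qbinomial (q^3) (2*n) (n+i) * qpoch (q^3) n"
  have sub: "(\<lambda>n. qpoch q (3*n)) \<longlonglongrightarrow> ?L"
  proof -
    have "(qpoch q \<circ> (\<lambda>n. 3*n)) \<longlonglongrightarrow> ?L"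
      by (rule LIMSEQ_subseq_LIMSEQ[OF qpoch_convergent]) (use q in \<open>auto simp: strict_mono_def\<close>)
    then show ?thesis by (simp add: o_def)
  qed
  have err: "(\<lambda>n. \<Sum>i\<le>n. pentagonal_term q i * (?c n i - 1)) \<longlonglongrightarrow> 0"
  proof (rule Lim_null_comparison)
    show "\<forall>\<^sub>F n in sequentially. norm (\<Sum>i\<le>n. pentagonal_term q i * (?c n i - 1)) \<le> 4 / (1-q) * ((real n + 1) * q^n)"
    proof (intro always_eventually allI)
      fix n
      have "norm (\<Sum>i\<le>n. pentagonal_term q i * (?c n i - 1)) \<le> (\<Sum>i\<le>n. \<bar>pentagonal_term q i\<bar> * \<bar>?c n i - 1\<bar>)"
        by (simp add: sum_abs[THEN order_trans] abs_mult)
      also have "\<dots> \<le> (\<Sum>i\<le>n. (2 * q^i) * (2 * q^(n-i) / (1 - q)))"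
        using q by (intro sum_mono mult_mono abs_pentagonal_term_le abs_qbinomial_qpoch_minus_1_le) auto
      also have "\<dots> = (\<Sum>i\<le>n. 4 / (1-q) * q^n)"
      proof (rule sum.cong[OF refl])
        fix i assume "i \<in> {..n}"
        then have "q^i * q^(n-i) = q^n" by (simp add: power_add[symmetric])
        then show "(2 * q^i) * (2 * q^(n-i) / (1 - q)) = 4 / (1-q) * q^n" by (simp add: field_simps)
      qed
      also have "\<dots> = 4 / (1-q) * ((real n + 1) * q^n)" by simp
      finally show "norm (\<Sum>i\<le>n. pentagonal_term q i * (?c n i - 1)) \<le> 4 / (1-q) * ((real n + 1) * q^n)" .
    qed
    have "(\<lambda>n. real n * q^n + q^n) \<longlonglongrightarrow> 0 + 0"
      using q by (intro tendsto_add powser_times_n_limit_0 LIMSEQ_power_zero) auto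
    then have "(\<lambda>n. (real n + 1) * q^n) \<longlonglongrightarrow> 0" by (simp add: algebra_simps)
    then show "(\<lambda>n. 4 / (1-q) * ((real n + 1) * q^n)) \<longlonglongrightarrow> 0"
      using tendsto_mult_right_zero by blast
  qed
  have "(\<lambda>n. qpoch q (3*n) - (\<Sum>i\<le>n. pentagonal_term q i * (?c n i - 1))) \<longlonglongrightarrow> ?L - 0"
    by (intro tendsto_diff sub err)
  moreover have "qpoch q (3*n) - (\<Sum>i\<le>n. pentagonal_term q i * (?c n i - 1)) = (\<Sum>i\<le>n. pentagonal_term q i)" for n
    using pentagonal_finite[OF q, of n] by (simp add: sum_subtractf algebra_simps)
  ultimately have "(\<lambda>n. \<Sum>i\<le>n. pentagonal_term q i) \<longlonglongrightarrow> ?L" by simp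
  then have "(\<lambda>n. \<Sum>i<Suc n. pentagonal_term q i) \<longlonglongrightarrow> ?L" by (simp add: lessThan_Suc_atMost)
  then show ?thesis unfolding sums_def by (rule LIMSEQ_imp_Suc)
qed

section \<open>Hurwitz zeta values\<close>

lemma summable_hurwitz:
  assumes a: "a > 0" and s: "s \<ge> 2"
  shows "summable (\<lambda>m. 1 / (real m + a) ^ s)"
proof (rule summable_comparison_test')
  show "summable (\<lambda>n. inverse (real n ^ s))" using inverse_power_summable[OF s] by simp
  fix n :: nat assume "n \<ge> 1"
  then have "real n \<le> real n + a" "0 < real n" using a by auto
  then have "real n ^ s \<le> (real n + a) ^ s" by (intro power_mono) auto
  then show "norm (1 / (real n + a) ^ s) \<le> inverse (real n ^ s)"
    using \<open>0 < real n\<close> a by (simp add: field_simps)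
qed

lemma hurwitz_zeta_sums: "a > 0 \<Longrightarrow> s \<ge> 2 \<Longrightarrow> (\<lambda>m. 1 / (real m + a) ^ s) sums hurwitz_zeta s a"
  unfolding hurwitz_zeta_def by (rule summable_sums, rule summable_hurwitz)

lemma hurwitz_zeta_plus_1:
  assumes a: "a > 0" and s: "s \<ge> 2"
  shows "hurwitz_zeta s (a + 1) = hurwitz_zeta s a - 1/a^s"
proof -
  have "(\<lambda>n. 1 / (real (Suc n) + a) ^ s) sums (hurwitz_zeta s a - 1 / a^s)"
    using sums_Suc_iff[of "\<lambda>n. 1/(real n + a)^s" "hurwitz_zeta s a - 1 / a^s"] hurwitz_zeta_sums[OF a s] by simp
  moreover have "(\<lambda>n. 1 / (real (Suc n) + a) ^ s) = (\<lambda>n. 1 / (real n + (a+1)) ^ s)"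
    by (simp add: add_ac)
  ultimately have "(\<lambda>n. 1 / (real n + (a+1)) ^ s) sums (hurwitz_zeta s a - 1 / a^s)" by (simp only:)
  have h1: "(\<lambda>n. 1 / (real n + (a+1)) ^ s) sums hurwitz_zeta s (a+1)" using a s by (intro hurwitz_zeta_sums) auto
  from sums_unique2[OF \<open>(\<lambda>n. 1 / (real n + (a+1)) ^ s) sums (hurwitz_zeta s a - 1 / a^s)\<close> h1] show ?thesis by simp
qed

lemma alternating_sums_hurwitz_zeta:
  assumes c: "c > 0" and d: "d > 0" and s: "s \<ge> 2"
  shows "(\<lambda>j. (-1)^j / (c * real j + d) ^ s) sums
     ((1/(2*c)^s) * (hurwitz_zeta s (d / (2*c)) - hurwitz_zeta s ((c + d) / (2*c))))"
proof -
  let ?f = "\<lambda>j. (-1)^j / (c * real j + d) ^ s"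
  have eqn: "norm (?f j) = (1 / c^s) * (1 / (real j + d/c) ^ s)" for j
  proof -
    have "c * real j + d = c * (real j + d/c)" using c by (simp add: field_simps)
    then show ?thesis using c d by (simp add: power_mult_distrib norm_divide norm_power)
  qed
  have "summable ?f"
    by (rule summable_comparison_test'[where N=0, OF summable_mult[OF summable_hurwitz[of "d/c" s], of "1/c^s"]])
       (use c d s in \<open>simp_all only: eqn order_refl\<close>, simp)
  then have "?f sums suminf ?f" by (rule summable_sums)
  from sums_group[OF this, of 2]
  have g: "(\<lambda>n. ?f (2*n) + ?f (2*n+1)) sums suminf ?f" by (simp add: mult.commute)
  have e: "?f (2*n) + ?f (2*n+1) = (1/(2*c)^s) * (1 / (real n + d/(2*c))^s - 1 / (real n + (c+d)/(2*c))^s)" for n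
  proof -
    have 1: "c * real (2*n) + d = (2*c) * (real n + d/(2*c))" using c by (simp add: field_simps)
    have 2: "c * real (2*n+1) + d = (2*c) * (real n + (c+d)/(2*c))" using c by (simp add: field_simps)
    show ?thesis unfolding 1 2 power_mult_distrib by (simp add: ring_distribs)
  qed
  have h: "(\<lambda>n. (1/(2*c)^s) * (1 / (real n + d/(2*c))^s - 1 / (real n + (c+d)/(2*c))^s)) sums
     ((1/(2*c)^s) * (hurwitz_zeta s (d / (2*c)) - hurwitz_zeta s ((c + d) / (2*c))))"
    using c d s by (intro sums_mult sums_diff hurwitz_zeta_sums) auto
  have g': "(\<lambda>n. (1/(2*c)^s) * (1 / (real n + d/(2*c))^s - 1 / (real n + (c+d)/(2*c))^s)) sums suminf ?f"
    using g unfolding e .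
  have "suminf ?f = (1/(2*c)^s) * (hurwitz_zeta s (d / (2*c)) - hurwitz_zeta s ((c + d) / (2*c)))"
    by (rule sums_unique2[OF g' h])
  then show ?thesis using \<open>?f sums suminf ?f\<close> by (simp only:)
qed

lemma hurwitz_zeta_half:
  assumes s: "s \<ge> 2"
  shows "hurwitz_zeta s (1/2) = (2^s - 1) * riemann_zeta s"
proof -
  let ?f = "\<lambda>m. 1 / (real m + 1) ^ s"
  have "?f sums riemann_zeta s" unfolding riemann_zeta_def using hurwitz_zeta_sums[of 1 s] s by simp
  from sums_group[OF this, of 2]
  have g: "(\<lambda>n. ?f (2*n) + ?f (2*n+1)) sums riemann_zeta s" by (simp add: mult.commute)
  have e: "?f (2*n) + ?f (2*n+1) = (1/2^s) * (1 / (real n + 1/2)^s + 1 / (real n + 1)^s)" for n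
  proof -
    have 1: "real (2*n) + 1 = 2 * (real n + 1/2)" by simp
    have 2: "real (2*n+1) + 1 = 2 * (real n + 1)" by simp
    show ?thesis unfolding 1 2 power_mult_distrib by (simp add: ring_distribs)
  qed
  have h: "(\<lambda>n. (1/2^s) * (1 / (real n + 1/2)^s + 1 / (real n + 1)^s)) sums
      ((1/2^s) * (hurwitz_zeta s (1/2) + hurwitz_zeta s 1))"
    using s by (intro sums_mult sums_add hurwitz_zeta_sums) auto
  have g': "(\<lambda>n. (1/2^s) * (1 / (real n + 1/2)^s + 1 / (real n + 1)^s)) sums riemann_zeta s"
    using g unfolding e .
  have "riemann_zeta s = (1/2^s) * (hurwitz_zeta s (1/2) + riemann_zeta s)"
    using sums_unique2[OF g' h] unfolding riemann_zeta_def .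
  then show ?thesis by (simp add: field_simps)
qed

lemma Gamma_reflection_real:
  fixes x :: real assumes "0 < x" "x < 1"
  shows "Gamma x * Gamma (1 - x) = pi / sin (pi * x)"
proof -
  have "Gamma (complex_of_real x) * Gamma (1 - complex_of_real x) = of_real pi / sin (of_real pi * of_real x)"
    by (rule Gamma_reflection_complex)
  also have "Gamma (1 - complex_of_real x) = of_real (Gamma (1 - x))"
    by (metis Gamma_complex_of_real of_real_1 of_real_diff)
  also have "sin (of_real pi * of_real x) = complex_of_real (sin (pi * x))"
    by (metis of_real_mult sin_of_real)
  finally have "complex_of_real (Gamma x * Gamma (1 - x)) = complex_of_real (pi / sin (pi * x))"
    by (simp add: Gamma_complex_of_real)
  then show ?thesis by (simp only: of_real_eq_iff)
qed

lemma Digamma_reflection_real: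
  fixes x :: real assumes x: "0 < x" "x < 1"
  shows "Digamma (1 - x) - Digamma x = pi * cos (pi * x) / sin (pi * x)"
proof -
  let ?S = "{0<..<(1::real)}"
  have sinpos: "sin (pi * y) > 0" if "y \<in> ?S" for y
    using that by (intro sin_gt_zero) auto
  have eq: "ln_Gamma y + ln_Gamma (1 - y) = ln pi - ln (sin (pi * y))" if "y \<in> ?S" for y
  proof -
    have "exp (ln_Gamma y + ln_Gamma (1 - y)) = Gamma y * Gamma (1 - y)"
      using that by (simp add: exp_add Gamma_real_pos_exp)
    also have "\<dots> = pi / sin (pi * y)" using that by (intro Gamma_reflection_real) auto
    also have "\<dots> = exp (ln pi - ln (sin (pi * y)))" using sinpos[OF that] by (simp add: exp_diff)
    finally show ?thesis by simp
  qed
  have d1: "((\<lambda>y. ln pi - ln (sin (pi * y))) has_field_derivative (- (cos (pi * x) * pi / sin (pi * x)))) (at x)"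
    using sinpos[of x] x by (auto intro!: derivative_eq_intros simp: field_simps)
  have d2: "((\<lambda>y. ln_Gamma y + ln_Gamma (1 - y)) has_field_derivative (Digamma x - Digamma (1 - x))) (at x)"
    using x by (auto intro!: derivative_eq_intros)
  have d3: "((\<lambda>y. ln_Gamma y + ln_Gamma (1 - y)) has_field_derivative (- (cos (pi * x) * pi / sin (pi * x)))) (at x)"
    by (rule has_field_derivative_transform_within_open[OF d1, of ?S]) (use x eq in auto)
  from DERIV_unique[OF d2 d3] show ?thesis by (simp add: field_simps)
qed

lemma Digamma_diff_sums:
  fixes a b :: real assumes a: "a > 0" and b: "b > 0"
  shows "(\<lambda>m. 1/(real m + a) - 1/(real m + b)) sums (Digamma b - Digamma a)"
proof -
  have s: "(\<lambda>k. inverse (of_nat (Suc k)) - inverse (z + of_nat k)) sums (Digamma z + euler_mascheroni)"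
    if "z > 0" for z :: real
    using summable_Digamma[of z] that by (simp add: Digamma_def summable_sums)
  from sums_diff[OF s[OF b] s[OF a]] show ?thesis
    by (simp add: add.commute divide_inverse)
qed

text \<open>Pairing consecutive terms gives digamma differences at \<open>1/3, 2/3\<close> and \<open>5/6, 7/6\<close>, which the
  reflection formula evaluates.\<close>

lemma alternating_sums_pi_sqrt3:
  "(\<lambda>j. (-1)^j * (1/(3*real j+2) - 1/(3*real j+4))) sums (2*pi/(3 * sqrt 3) - 1)"
proof -
  let ?f = "\<lambda>j. (-1)^j * (1/(3*real j+2) - 1/(3*real j+4)) :: real"
  have "summable ?f"
  proof (rule summable_comparison_test'[where N=0, OF summable_hurwitz[of 1 2]])
    fix n :: nat
    have "norm (?f n) = 2 / ((3*real n+2)*(3*real n+4))" by (simp add: abs_mult field_simps)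
    also have "\<dots> \<le> 1 / (real n + 1)^2"
    proof -
      have "2 * (real n + 1)^2 \<le> (3*real n+2)*(3*real n+4)" by (simp add: power2_eq_square algebra_simps)
      then show ?thesis by (simp add: divide_simps)
    qed
    finally show "norm (?f n) \<le> 1 / (real n + 1)^2" .
  qed auto
  then have "?f sums suminf ?f" by (rule summable_sums)
  from sums_group[OF this, of 2]
  have g: "(\<lambda>n. ?f (2*n) + ?f (2*n+1)) sums suminf ?f" by (simp add: mult.commute)
  have e: "?f (2*n) + ?f (2*n+1) = (1/6) * ((1/(real n + 1/3) - 1/(real n + 2/3)) + (1/(real n + 7/6) - 1/(real n + 5/6)))" for n
    by (simp add: field_split_simps; simp add: algebra_simps)
  have h: "(\<lambda>n. (1/6) * ((1/(real n + 1/3) - 1/(real n + 2/3)) + (1/(real n + 7/6) - 1/(real n + 5/6)))) sums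
     ((1/6) * ((Digamma (2/3) - Digamma (1/3)) + (Digamma (5/6) - Digamma (7/6))))"
    by (intro sums_mult sums_add Digamma_diff_sums) auto
  have g': "(\<lambda>n. (1/6) * ((1/(real n + 1/3) - 1/(real n + 2/3)) + (1/(real n + 7/6) - 1/(real n + 5/6)))) sums suminf ?f"
    using g unfolding e .
  have eq: "suminf ?f = (1/6) * ((Digamma (2/3) - Digamma (1/3)) + (Digamma (5/6) - Digamma (7/6)))"
    by (rule sums_unique2[OF g' h])
  have d1: "Digamma (2/3) - Digamma (1/3) = pi / sqrt 3"
    using Digamma_reflection_real[of "1/3"] by (simp add: sin_60 cos_60 field_simps)
  have d2: "Digamma (5/6) - Digamma (1/6) = pi * sqrt 3"
    using Digamma_reflection_real[of "1/6"] by (simp add: sin_30 cos_30 field_simps)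
  have d3: "Digamma (7/6) = Digamma (1/6) + (6::real)"
    using Digamma_plus1[of "1/6::real"] by simp
  have "suminf ?f = 2*pi/(3 * sqrt 3) - 1"
    unfolding eq using d1 d2 d3 by (simp add: field_simps)
  then show ?thesis using \<open>?f sums suminf ?f\<close> by simp
qed

section \<open>Partial fractions of the reciprocal pentagonal numbers\<close>

lemma sum_choose_pascal:
  fixes f :: "nat \<Rightarrow> real"
  assumes "m \<le> N"
  shows "(\<Sum>i\<in>{1..m}. real ((Suc N - i) choose Suc c) * f i)
    = (\<Sum>i\<in>{1..m}. real ((N - i) choose c) * f i) + (\<Sum>i\<in>{1..m}. real ((N - i) choose Suc c) * f i)"
proof -
  have "real ((Suc N - i) choose Suc c) * f i = real ((N - i) choose c) * f i + real ((N - i) choose Suc c) * f i"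
    if "i \<in> {1..m}" for i
  proof -
    from that assms have "Suc N - i = Suc (N - i)" by auto
    then show ?thesis by (simp add: algebra_simps)
  qed
  then show ?thesis by (simp add: sum.distrib[symmetric])
qed

text \<open>The hypothesis \<open>u + w = u * w\<close>, i.e. \<open>1/u + 1/w = 1\<close>, lets one peel off a factor \<open>u * w\<close> at a
  time; this is the partial fraction expansion of \<open>u\<^sup>a\<^sup>+\<^sup>1 w\<^sup>b\<^sup>+\<^sup>1\<close>.\<close>

lemma partial_fractions_power_base:
  fixes u w :: real assumes uv: "u + w = u*w"
  shows "u^(Suc a) * w = (\<Sum>i\<in>{1..Suc a}. u^i) + w"
proof (induction a)
  case 0 then show ?case using uv by simp
next
  case (Suc a)
  have "u^(Suc (Suc a)) * w = u * (u^(Suc a) * w)" by simp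
  also have "\<dots> = u * (\<Sum>i\<in>{1..Suc a}. u^i) + u*w" using Suc by (simp add: algebra_simps)
  also have "u * (\<Sum>i\<in>{1..Suc a}. u^i) = (\<Sum>i\<in>{1..Suc a}. u^(Suc i))" by (simp only: sum_distrib_left power_Suc)
  also have "\<dots> = (\<Sum>i\<in>{2..Suc (Suc a)}. u^i)"
    by (rule sum.reindex_bij_witness[where i="\<lambda>i. i - 1" and j="Suc"]) auto
  finally have "u^(Suc (Suc a)) * w = (\<Sum>i\<in>{2..Suc (Suc a)}. u^i) + u + w" using uv by simp
  moreover have "(\<Sum>i\<in>{1..Suc (Suc a)}. u^i) = u + (\<Sum>i\<in>{2..Suc (Suc a)}. u^i)"
    by (simp add: sum.atLeast_Suc_atMost numeral_2_eq_2)
  ultimately show ?case by simp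
qed

lemma partial_fractions_power:
  fixes u w :: real assumes uv: "u + w = u*w"
  shows "u^(Suc a) * w^(Suc b) = (\<Sum>i\<in>{1..Suc a}. real ((a+b+1-i) choose b) * u^i)
        + (\<Sum>i\<in>{1..Suc b}. real ((a+b+1-i) choose a) * w^i)"
proof (induction b arbitrary: a)
  case 0
  have "(\<Sum>i\<in>{1..Suc a}. real ((a+0+1-i) choose 0) * u^i) = (\<Sum>i\<in>{1..Suc a}. u^i)" by simp
  then show ?case using partial_fractions_power_base[OF uv, of a] by simp
next
  case (Suc b)
  note outer = Suc.IH
  show ?case
  proof (induction a)
    case 0
    have uv': "w + u = w * u" using uv by (simp add: algebra_simps)
    have "u^(Suc 0) * w^(Suc (Suc b)) = w^(Suc (Suc b)) * u" by simp
    also have "\<dots> = (\<Sum>i\<in>{1..Suc (Suc b)}. w^i) + u" by (rule partial_fractions_power_base[OF uv'])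
    finally show ?case by simp
  next
    case (Suc a)
    note IHa = Suc.IH
    have rec: "u^(Suc (Suc a)) * w^(Suc (Suc b)) = u^(Suc (Suc a)) * w^(Suc b) + u^(Suc a) * w^(Suc (Suc b))"
    proof -
      have "u^(Suc (Suc a)) * w^(Suc (Suc b)) = u^(Suc a) * w^(Suc b) * (u*w)" by (simp add: algebra_simps)
      also have "\<dots> = u^(Suc a) * w^(Suc b) * (u+w)" using uv by simp
      finally show ?thesis by (simp add: algebra_simps)
    qed
    have shift: "\<And>i. a+b+3-i = Suc (a+b+2) - i" by simp
    have A: "(\<Sum>i\<in>{1..Suc (Suc a)}. real ((a+b+3-i) choose (Suc b)) * u^i)
      = (\<Sum>i\<in>{1..Suc (Suc a)}. real ((a+b+2-i) choose b) * u^i)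
      + (\<Sum>i\<in>{1..Suc a}. real ((a+b+2-i) choose (Suc b)) * u^i)"
      unfolding shift using sum_choose_pascal[of "Suc (Suc a)" "a+b+2" b "\<lambda>i. u^i"] by (simp add: sum.cl_ivl_Suc)
    have B: "(\<Sum>i\<in>{1..Suc (Suc b)}. real ((a+b+3-i) choose (Suc a)) * w^i)
      = (\<Sum>i\<in>{1..Suc b}. real ((a+b+2-i) choose (Suc a)) * w^i)
      + (\<Sum>i\<in>{1..Suc (Suc b)}. real ((a+b+2-i) choose a) * w^i)"
      unfolding shift using sum_choose_pascal[of "Suc (Suc b)" "a+b+2" a "\<lambda>i. w^i"] by (simp add: sum.cl_ivl_Suc)
    have e1: "u^(Suc (Suc a)) * w^(Suc b) = (\<Sum>i\<in>{1..Suc (Suc a)}. real ((a+b+2-i) choose b) * u^i)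
        + (\<Sum>i\<in>{1..Suc b}. real ((a+b+2-i) choose (Suc a)) * w^i)"
      using outer[of "Suc a"] by simp
    have e2: "u^(Suc a) * w^(Suc (Suc b)) = (\<Sum>i\<in>{1..Suc a}. real ((a+b+2-i) choose (Suc b)) * u^i)
        + (\<Sum>i\<in>{1..Suc (Suc b)}. real ((a+b+2-i) choose a) * w^i)"
      using IHa by simp
    have "u^(Suc (Suc a)) * w^(Suc (Suc b)) = (\<Sum>i\<in>{1..Suc (Suc a)}. real ((a+b+3-i) choose (Suc b)) * u^i)
        + (\<Sum>i\<in>{1..Suc (Suc b)}. real ((a+b+3-i) choose (Suc a)) * w^i)"
      unfolding rec e1 e2 A B by simp
    moreover have eqs: "\<And>i. Suc a + Suc b + 1 - i = a+b+3-i" by simp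
    ultimately show ?case by (simp only: eqs)
  qed
qed

lemma partial_fractions_power_diag:
  fixes u w :: real assumes uv: "u + w = u*w" and k: "k \<ge> 1"
  shows "(u*w)^k = (\<Sum>i\<in>{1..k}. real ((2*k-1-i) choose (k-1)) * (u^i + w^i))"
proof -
  obtain m where m: "k = Suc m" using k by (cases k) auto
  have "(u*w)^k = u^(Suc m) * w^(Suc m)" using m by (simp add: power_mult_distrib)
  also have "\<dots> = (\<Sum>i\<in>{1..Suc m}. real ((m+m+1-i) choose m) * u^i)
        + (\<Sum>i\<in>{1..Suc m}. real ((m+m+1-i) choose m) * w^i)" by (rule partial_fractions_power[OF uv])
  also have "\<dots> = (\<Sum>i\<in>{1..k}. real ((2*k-1-i) choose (k-1)) * (u^i + w^i))"
  proof -
    have e: "\<And>i. 2*k-1-i = m+m+1-i" using m by simp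
    show ?thesis unfolding e unfolding m by (simp add: sum.distrib[symmetric] algebra_simps)
  qed
  finally show ?thesis .
qed

lemma reciprocal_pentagonal_powers_expand:
  assumes k: "k \<ge> 1"
  shows "(2/((real j+1)*(3*real j+2)))^k + (2/((real j+1)*(3*real j+4)))^k =
    (-6)^k * (\<Sum>i\<in>{1..k}. real ((2*k-1-i) choose (k-1)) *
        ((-1)^i/(3*real j+2)^i + 1/(3*real j+4)^i + (1+(-1)^i)/(3*real j+3)^i))"
proof -
  define u1 where "u1 = 1/(3*real j+3)"
  define w1 where "w1 = -1/(3*real j+2)"
  define u2 where "u2 = -1/(3*real j+3)"
  define w2 where "w2 = 1/(3*real j+4)"
  have h1: "u1 + w1 = u1*w1" unfolding u1_def w1_def by (simp add: field_split_simps; simp add: algebra_simps)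
  have h2: "u2 + w2 = u2*w2" unfolding u2_def w2_def by (simp add: field_split_simps; simp add: algebra_simps)
  have a1: "2/((real j+1)*(3*real j+2)) = -6 * (u1*w1)" unfolding u1_def w1_def by (simp add: field_split_simps; simp add: algebra_simps)
  have a2: "2/((real j+1)*(3*real j+4)) = -6 * (u2*w2)" unfolding u2_def w2_def by (simp add: field_split_simps; simp add: algebra_simps)
  have p: "(u1^i + w1^i) + (u2^i + w2^i) = (-1)^i/(3*real j+2)^i + 1/(3*real j+4)^i + (1+(-1)^i)/(3*real j+3)^i" for i
  proof -
    have "u1^i = 1/(3*real j+3)^i" "w1^i = (-1)^i/(3*real j+2)^i" "u2^i = (-1)^i/(3*real j+3)^i"
      "w2^i = 1/(3*real j+4)^i" unfolding u1_def w1_def u2_def w2_def by (simp_all add: power_divide power_minus[of "1/_"])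
    then show ?thesis by (simp add: add_divide_distrib)
  qed
  have "(2/((real j+1)*(3*real j+2)))^k + (2/((real j+1)*(3*real j+4)))^k
     = (-6)^k * ((u1*w1)^k + (u2*w2)^k)" unfolding a1 a2 by (simp only: power_mult_distrib[of "-6"] ring_distribs)
  also have "(u1*w1)^k + (u2*w2)^k = (\<Sum>i\<in>{1..k}. real ((2*k-1-i) choose (k-1)) * ((u1^i + w1^i) + (u2^i + w2^i)))"
    unfolding partial_fractions_power_diag[OF h1 k] partial_fractions_power_diag[OF h2 k] by (simp add: sum.distrib[symmetric] algebra_simps)
  finally show ?thesis unfolding p .
qed

definition pf_term :: "nat \<Rightarrow> nat \<Rightarrow> real" where
  "pf_term i j = (-1)^i/(3*real j+2)^i + 1/(3*real j+4)^i + (1+(-1)^i)/(3*real j+3)^i"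

text \<open>The sum of \<open>(-1)\<^sup>j * pf_term i j\<close> over \<open>j\<close>. For \<open>i = 1\<close> Hurwitz zeta has its pole, and
  the value comes from the digamma reflection formula instead.\<close>

definition pf_term_sum :: "nat \<Rightarrow> real" where
  "pf_term_sum i = (if i = 1 then -(2*pi/(3 * sqrt 3) - 1) else
     (-1)^i * ((1/6^i) * (hurwitz_zeta i (1/3) - hurwitz_zeta i (5/6)))
     + (1/6^i) * (hurwitz_zeta i (2/3) - hurwitz_zeta i (1/6) + 6^i)
     + (1+(-1)^i) * ((1/6^i) * ((2^i - 2) * riemann_zeta i)))"

lemma pf_term_sums:
  assumes i: "i \<ge> 1"
  shows "(\<lambda>j. (-1)^j * pf_term i j) sums pf_term_sum i"
proof (cases "i = 1")
  case True
  have "(\<lambda>j. - ((-1)^j * (1/(3*real j+2) - 1/(3*real j+4)))) sums (-(2*pi/(3 * sqrt 3) - 1))"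
    by (rule sums_minus[OF alternating_sums_pi_sqrt3])
  moreover have "(\<lambda>j. (-1)^j * pf_term i j) = (\<lambda>j. - ((-1)^j * (1/(3*real j+2) - 1/(3*real j+4))))"
    using True by (auto simp: pf_term_def algebra_simps)
  ultimately show ?thesis using True by (simp add: pf_term_sum_def)
next
  case False
  then have s: "i \<ge> 2" using i by simp
  have A: "(\<lambda>j. (-1)^j / (3 * real j + 2) ^ i) sums ((1/6^i) * (hurwitz_zeta i (1/3) - hurwitz_zeta i (5/6)))"
    using alternating_sums_hurwitz_zeta[of 3 2 i] s by simp
  have B: "(\<lambda>j. (-1)^j / (3 * real j + 4) ^ i) sums ((1/6^i) * (hurwitz_zeta i (2/3) - hurwitz_zeta i (7/6)))"
    using alternating_sums_hurwitz_zeta[of 3 4 i] s by simp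
  have C: "(\<lambda>j. (-1)^j / (3 * real j + 3) ^ i) sums ((1/6^i) * (hurwitz_zeta i (1/2) - hurwitz_zeta i 1))"
    using alternating_sums_hurwitz_zeta[of 3 3 i] s by simp
  have h76: "hurwitz_zeta i (7/6) = hurwitz_zeta i (1/6) - 6^i"
    using hurwitz_zeta_plus_1[of "1/6" i] s by (simp add: power_divide)
  have hh: "hurwitz_zeta i (1/2) - hurwitz_zeta i 1 = (2^i - 2) * riemann_zeta i"
    using hurwitz_zeta_half[OF s] by (simp add: riemann_zeta_def algebra_simps)
  have "(\<lambda>j. (-1)^i * ((-1)^j / (3 * real j + 2) ^ i) + (-1)^j / (3 * real j + 4) ^ i
      + (1+(-1)^i) * ((-1)^j / (3 * real j + 3) ^ i)) sums
      ((-1)^i * ((1/6^i) * (hurwitz_zeta i (1/3) - hurwitz_zeta i (5/6)))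
       + ((1/6^i) * (hurwitz_zeta i (2/3) - hurwitz_zeta i (7/6)))
       + (1+(-1)^i) * ((1/6^i) * (hurwitz_zeta i (1/2) - hurwitz_zeta i 1)))"
    by (intro sums_add sums_mult A B C)
  also have "((-1)^i * ((1/6^i) * (hurwitz_zeta i (1/3) - hurwitz_zeta i (5/6)))
       + ((1/6^i) * (hurwitz_zeta i (2/3) - hurwitz_zeta i (7/6)))
       + (1+(-1)^i) * ((1/6^i) * (hurwitz_zeta i (1/2) - hurwitz_zeta i 1))) = pf_term_sum i"
    unfolding pf_term_sum_def h76 hh using False by simp
  moreover have "(\<lambda>j. (-1)^j * pf_term i j) = (\<lambda>j. (-1)^i * ((-1)^j / (3 * real j + 2) ^ i) + (-1)^j / (3 * real j + 4) ^ i
      + (1+(-1)^i) * ((-1)^j / (3 * real j + 3) ^ i))"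
    by (auto simp: pf_term_def algebra_simps)
  ultimately show ?thesis by simp
qed

definition moment_bracket :: "nat \<Rightarrow> real" where
  "moment_bracket k = ( - (6 ^ k) * (2 * pi / (3 * sqrt 3) - 1) * real ((2*k-2) choose (k-1))
        + (\<Sum>j=1..k div 2. 2 ^ (k+1) * real ((2*k-2*j-1) choose (k-1)) * 3 ^ (k-2*j)
              * riemann_zeta (2*j) * (1 - 1 / 2 ^ (2*j-1)))
        + (\<Sum>j=2..k. real ((2*k-j-1) choose (k-1)) * 6 ^ (k-j)
              * ((-1) ^ j * (hurwitz_zeta j (1/3) - hurwitz_zeta j (5/6))
                 + hurwitz_zeta j (2/3) - hurwitz_zeta j (1/6) + 6 ^ j)))"

lemma sum_even_indices:
  fixes T :: "nat \<Rightarrow> real"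
  assumes "\<And>i. odd i \<Longrightarrow> T i = 0"
  shows "(\<Sum>i\<in>{2..k}. T i) = (\<Sum>j\<in>{1..k div 2}. T (2*j))"
proof -
  have "(\<Sum>i\<in>{2..k}. T i) = (\<Sum>i\<in>{i\<in>{2..k}. even i}. T i)"
    by (rule sum.mono_neutral_right) (use assms in auto)
  also have "{i\<in>{2..k}. even i} = (\<lambda>j. 2*j) ` {1..k div 2}"
  proof (intro set_eqI iffI)
    fix x assume "x \<in> {i\<in>{2..k}. even i}"
    then obtain j where "x = 2*j" "2 \<le> x" "x \<le> k" by (auto elim!: evenE)
    then show "x \<in> (\<lambda>j. 2*j) ` {1..k div 2}" by (auto intro!: image_eqI[of _ _ j])
  qed auto
  also have "(\<Sum>i\<in>(\<lambda>j. 2*j) ` {1..k div 2}. T i) = (\<Sum>j\<in>{1..k div 2}. T (2*j))"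
    by (rule sum.reindex_cong[of "\<lambda>j. 2*j"]) (auto simp: inj_on_def)
  finally show ?thesis .
qed

lemma sum_even_zeta_terms:
  "(\<Sum>i\<in>{2..k}. real ((2*k-1-i) choose (k-1)) * 6^(k-i) * ((1+(-1)^i) * ((2^i - 2) * riemann_zeta i)))
     = (\<Sum>j=1..k div 2. 2 ^ (k+1) * real ((2*k-2*j-1) choose (k-1)) * 3 ^ (k-2*j)
              * riemann_zeta (2*j) * (1 - 1 / 2 ^ (2*j-1)))"
proof -
  have "(\<Sum>i\<in>{2..k}. real ((2*k-1-i) choose (k-1)) * 6^(k-i) * ((1+(-1)^i) * ((2^i - 2) * riemann_zeta i)))
     = (\<Sum>j\<in>{1..k div 2}. real ((2*k-1-2*j) choose (k-1)) * 6^(k-2*j) * ((1+(-1)^(2*j)) * ((2^(2*j) - 2) * riemann_zeta (2*j))))"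
    by (rule sum_even_indices) simp
  also have "\<dots> = (\<Sum>j=1..k div 2. 2 ^ (k+1) * real ((2*k-2*j-1) choose (k-1)) * 3 ^ (k-2*j)
            * riemann_zeta (2*j) * (1 - 1 / 2 ^ (2*j-1)))"
  proof (rule sum.cong[OF refl])
    fix j assume j: "j \<in> {1..k div 2}"
    have "2*j \<le> 2*(k div 2)" using j by simp
    moreover have "2*(k div 2) \<le> k" by simp
    ultimately have "2*j \<le> k" by linarith
    then obtain r where r: "k = 2*j + r" using le_Suc_ex by blast
    obtain j' where j': "j = Suc j'" using j by (cases j) auto
    have e1: "2*k-1-2*j = 2*k-2*j-1" by simp
    have e2: "(6::real)^(k-2*j) = 2^r * 3^r" using r by (simp add: power_mult_distrib[symmetric])
    have e3: "(2::real)^(k+1) = 2^r * 2^(2*j) * 2" using r by (simp add: power_add)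
    have e4: "(2::real)^(2*j) = 2^(2*j-1) * 2" using j' by simp
    have e5: "(3::real)^(k-2*j) = 3^r" using r by simp
    show "real ((2*k-1-2*j) choose (k-1)) * 6^(k-2*j) * ((1+(-1)^(2*j)) * ((2^(2*j) - 2) * riemann_zeta (2*j))) =
       2 ^ (k+1) * real ((2*k-2*j-1) choose (k-1)) * 3 ^ (k-2*j) * riemann_zeta (2*j) * (1 - 1 / 2 ^ (2*j-1))"
      unfolding e1 e2 e3 e5 e4 by (simp add: field_simps)
  qed
  finally show ?thesis .
qed

lemma moment_bracket_eq:
  assumes k: "k \<ge> 1"
  shows "6^k * (\<Sum>i\<in>{1..k}. real ((2*k-1-i) choose (k-1)) * pf_term_sum i) = moment_bracket k"
proof -
  let ?C = "\<lambda>i. real ((2*k-1-i) choose (k-1))"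
  have split: "(\<Sum>i\<in>{1..k}. ?C i * pf_term_sum i) = ?C 1 * pf_term_sum 1 + (\<Sum>i\<in>{2..k}. ?C i * pf_term_sum i)"
    using k by (simp add: sum.atLeast_Suc_atMost numeral_2_eq_2)
  have t2: "6^k * (?C i * pf_term_sum i) =
      ?C i * 6 ^ (k-i) * ((-1) ^ i * (hurwitz_zeta i (1/3) - hurwitz_zeta i (5/6))
                 + hurwitz_zeta i (2/3) - hurwitz_zeta i (1/6) + 6 ^ i)
      + ?C i * 6^(k-i) * ((1+(-1)^i) * ((2^i - 2) * riemann_zeta i))" if "i \<in> {2..k}" for i
  proof -
    from that have "6^k = 6^(k-i) * (6::real)^i" by (simp add: power_add[symmetric])
    moreover have "(6::real)^i > 0" by simp
    ultimately show ?thesis using that by (simp add: pf_term_sum_def field_simps)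
  qed
  have "6^k * (\<Sum>i\<in>{1..k}. ?C i * pf_term_sum i) = 6^k * (?C 1 * pf_term_sum 1) + (\<Sum>i\<in>{2..k}. 6^k * (?C i * pf_term_sum i))"
    unfolding split by (simp add: sum_distrib_left ring_distribs)
  also have "(\<Sum>i\<in>{2..k}. 6^k * (?C i * pf_term_sum i)) = (\<Sum>i\<in>{2..k}. ?C i * 6 ^ (k-i) * ((-1) ^ i * (hurwitz_zeta i (1/3) - hurwitz_zeta i (5/6))
                 + hurwitz_zeta i (2/3) - hurwitz_zeta i (1/6) + 6 ^ i))
      + (\<Sum>i\<in>{2..k}. ?C i * 6^(k-i) * ((1+(-1)^i) * ((2^i - 2) * riemann_zeta i)))"
    unfolding sum.distrib[symmetric] by (rule sum.cong[OF refl], rule t2)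
  also have "6^k * (?C 1 * pf_term_sum 1) = - (6 ^ k) * (2 * pi / (3 * sqrt 3) - 1) * real ((2*k-2) choose (k-1))"
    by (simp add: pf_term_sum_def numeral_2_eq_2 algebra_simps)
  finally show ?thesis unfolding sum_even_zeta_terms moment_bracket_def
    by (simp add: algebra_simps)
qed

lemma sums_reciprocal_pentagonal_powers:
  assumes k: "k \<ge> 1"
  shows "(\<lambda>j. (-1)^j * ((2/((real j+1)*(3*real j+2)))^k + (2/((real j+1)*(3*real j+4)))^k))
     sums ((-1)^k * moment_bracket k)"
proof -
  let ?C = "\<lambda>i. real ((2*k-1-i) choose (k-1))"
  have eq: "(\<lambda>j. (-1)^j * ((2/((real j+1)*(3*real j+2)))^k + (2/((real j+1)*(3*real j+4)))^k))
     = (\<lambda>j. (-6)^k * (\<Sum>i\<in>{1..k}. ?C i * ((-1)^j * pf_term i j)))"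
    by (rule ext, subst reciprocal_pentagonal_powers_expand[OF k]) (simp add: pf_term_def sum_distrib_left algebra_simps)
  have "(\<lambda>j. (-6)^k * (\<Sum>i\<in>{1..k}. ?C i * ((-1)^j * pf_term i j))) sums ((-6)^k * (\<Sum>i\<in>{1..k}. ?C i * pf_term_sum i))"
    by (intro sums_mult sums_sum pf_term_sums) auto
  also have "(-6::real)^k * (\<Sum>i\<in>{1..k}. ?C i * pf_term_sum i) = (-1)^k * moment_bracket k"
    using moment_bracket_eq[OF k] by (simp add: power_minus[of 6])
  finally show ?thesis unfolding eq .
qed

section \<open>Moments via the tail integral\<close>

text \<open>The pentagonal exponents \<open>n(3n-1)/2\<close> and \<open>n(3n+1)/2\<close> at \<open>n = j + 1\<close>.\<close>

definition pent_lo :: "nat \<Rightarrow> real" where "pent_lo j = real (3*triangular (Suc j) + Suc j)"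

definition pent_hi :: "nat \<Rightarrow> real" where "pent_hi j = real (3*triangular (Suc j) + 2 * Suc j)"

lemma pent_lo_eq: "pent_lo j = (real j + 1) * (3 * real j + 2) / 2"
  unfolding pent_lo_def by (simp add: real_triangular field_simps)

lemma pent_hi_eq: "pent_hi j = (real j + 1) * (3 * real j + 4) / 2"
  unfolding pent_hi_def by (simp add: real_triangular field_simps)

lemma pent_lo_ge_square: "pent_lo j \<ge> (real j + 1)^2"
  unfolding pent_lo_eq by (simp add: power2_eq_square field_simps)

lemma pent_hi_ge_square: "pent_hi j \<ge> (real j + 1)^2"
  unfolding pent_hi_eq by (simp add: power2_eq_square field_simps)

lemma pent_lo_ge: "pent_lo j \<ge> real j + 1"
  using pent_lo_ge_square[of j] by (smt (verit) of_nat_0_le_iff power2_eq_square mult_le_cancel_left1)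

lemma pent_hi_ge: "pent_hi j \<ge> real j + 1"
  using pent_hi_ge_square[of j] by (smt (verit) of_nat_0_le_iff power2_eq_square mult_le_cancel_left1)

lemma exp_pentagonal_le:
  assumes "x \<ge> 0"
  shows "exp (-(pent_lo j * x)) + exp (-(pent_hi j * x)) \<le> 2 * exp (-x) ^ (Suc j)"
proof -
  have e: "exp (-x) ^ (Suc j) = exp (-((real j + 1) * x))"
    by (subst exp_of_nat_mult[symmetric]) (simp add: algebra_simps)
  have ce: "exp (-(c * x)) \<le> exp (-x) ^ (Suc j)" if "c \<ge> real j + 1" for c
    unfolding e using that assms by (simp add: mult_right_mono)
  show ?thesis using ce[OF pent_lo_ge[of j]] ce[OF pent_hi_ge[of j]] by simp
qed

lemma one_minus_euler_function_sums:
  assumes x: "x > 0"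
  shows "(\<lambda>j. (-1)^j * (exp (-(pent_lo j * x)) + exp (-(pent_hi j * x)))) sums (1 - euler_function (exp (-x)))"
proof -
  let ?q = "exp (-x)"
  have q: "0 < ?q" "?q < 1" using x by auto
  have "pentagonal_term ?q sums euler_function (exp (-x))" unfolding euler_function_def by (rule pentagonal_number_theorem[OF q])
  then have "(\<lambda>j. pentagonal_term ?q (Suc j)) sums (euler_function (exp (-x)) - pentagonal_term ?q 0)" by (subst sums_Suc_iff) simp
  then have "(\<lambda>j. - pentagonal_term ?q (Suc j)) sums (1 - euler_function (exp (-x)))" using sums_minus by (fastforce simp: pentagonal_term_def)
  moreover have "- pentagonal_term ?q (Suc j) = (-1)^j * (exp (-(pent_lo j * x)) + exp (-(pent_hi j * x)))" for j
  proof -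
    have "exp (-(pent_lo j * x)) = ?q ^ (3*triangular (Suc j) + Suc j)"
      unfolding pent_lo_def by (subst exp_of_nat_mult[symmetric]) simp
    moreover have "exp (-(pent_hi j * x)) = ?q ^ (3*triangular (Suc j) + 2 * Suc j)"
      unfolding pent_hi_def by (subst exp_of_nat_mult[symmetric]) simp
    ultimately show ?thesis by (simp add: pentagonal_term_def)
  qed
  ultimately show ?thesis by simp
qed

lemma nn_integral_power_deriv:
  assumes y: "y \<ge> 0" and k: "k \<ge> 1"
  shows "(\<integral>\<^sup>+x. ennreal (real k * x^(k-1)) * indicator {0<..<y} x \<partial>lborel) = ennreal (y^k)"
proof -
  have "(\<integral>\<^sup>+x. ennreal (real k * x^(k-1)) * indicator {0..y} x \<partial>lborel) = ennreal (y^k - 0^k)"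
  proof (rule nn_integral_FTC_Icc)
    show "(\<lambda>x. real k * x^(k-1)) \<in> borel_measurable borel" by measurable
    fix x assume "x \<in> {0..y}"
    then show "DERIV (\<lambda>x. x^k) x :> real k * x^(k-1)" "0 \<le> real k * x^(k-1)"
      by (auto intro!: derivative_eq_intros)
  qed (use y in auto)
  also have "y^k - 0^k = y^k" using k by simp
  also have "(\<integral>\<^sup>+x. ennreal (real k * x^(k-1)) * indicator {0..y} x \<partial>lborel)
      = (\<integral>\<^sup>+x. ennreal (real k * x^(k-1)) * indicator {0<..<y} x \<partial>lborel)"
  proof (rule nn_integral_cong_AE)
    show "AE x in lborel. ennreal (real k * x^(k-1)) * indicator {0..y} x = ennreal (real k * x^(k-1)) * indicator {0<..<y} x"
      using AE_lborel_singleton[of 0] AE_lborel_singleton[of y]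
      by eventually_elim (auto split: split_indicator)
  qed
  finally show ?thesis .
qed

lemma (in sigma_finite_measure) nn_integral_power_layer_cake:
  assumes Y[measurable]: "Y \<in> borel_measurable M" and nn: "AE \<omega> in M. 0 \<le> Y \<omega>" and k: "k \<ge> 1"
  shows "(\<integral>\<^sup>+\<omega>. ennreal (Y \<omega> ^ k) \<partial>M) =
    (\<integral>\<^sup>+x. ennreal (real k * x^(k-1)) * indicator {0<..} x * emeasure M {\<omega>\<in>space M. x < Y \<omega>} \<partial>lborel)"
proof -
  interpret pair_sigma_finite M lborel ..
  define f where "f \<omega> x = ennreal (real k * x^(k-1)) * indicator {0<..} x * (if x < Y \<omega> then 1 else 0)" for \<omega> x
  have fm: "case_prod f \<in> borel_measurable (M \<Otimes>\<^sub>M lborel)" unfolding f_def by measurable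
  have "(\<integral>\<^sup>+\<omega>. ennreal (Y \<omega> ^ k) \<partial>M) = (\<integral>\<^sup>+\<omega>. (\<integral>\<^sup>+x. f \<omega> x \<partial>lborel) \<partial>M)"
  proof (rule nn_integral_cong_AE)
    show "AE \<omega> in M. ennreal (Y \<omega> ^ k) = (\<integral>\<^sup>+x. f \<omega> x \<partial>lborel)"
      using nn
    proof eventually_elim
      case (elim \<omega>)
      have "(\<integral>\<^sup>+x. f \<omega> x \<partial>lborel) = (\<integral>\<^sup>+x. ennreal (real k * x^(k-1)) * indicator {0<..<Y \<omega>} x \<partial>lborel)"
        unfolding f_def by (intro nn_integral_cong) (auto split: split_indicator)
      also have "\<dots> = ennreal (Y \<omega> ^ k)" using elim k by (rule nn_integral_power_deriv)
      finally show ?case by simp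
    qed
  qed
  also have "\<dots> = (\<integral>\<^sup>+x. (\<integral>\<^sup>+\<omega>. f \<omega> x \<partial>M) \<partial>lborel)"
    using Fubini'[OF fm] by simp
  also have "\<dots> = (\<integral>\<^sup>+x. ennreal (real k * x^(k-1)) * indicator {0<..} x * emeasure M {\<omega>\<in>space M. x < Y \<omega>} \<partial>lborel)"
  proof (rule nn_integral_cong)
    fix x
    have "(\<integral>\<^sup>+\<omega>. f \<omega> x \<partial>M) = (\<integral>\<^sup>+\<omega>. (ennreal (real k * x^(k-1)) * indicator {0<..} x) * indicator {\<omega>\<in>space M. x < Y \<omega>} \<omega> \<partial>M)"
      unfolding f_def by (intro nn_integral_cong) (auto split: split_indicator)
    also have "\<dots> = ennreal (real k * x^(k-1)) * indicator {0<..} x * emeasure M {\<omega>\<in>space M. x < Y \<omega>}"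
      by (rule nn_integral_cmult_indicator) measurable
    finally show "(\<integral>\<^sup>+\<omega>. f \<omega> x \<partial>M) = ennreal (real k * x^(k-1)) * indicator {0<..} x * emeasure M {\<omega>\<in>space M. x < Y \<omega>}" .
  qed
  finally show ?thesis .
qed

lemma has_bochner_integral_power_exp:
  assumes a: "a > 0" and k: "k \<ge> 1"
  shows "has_bochner_integral lborel (\<lambda>x. indicator {0<..} x * (real k * x^(k-1) * exp (-(a * x)))) (fact k / a^k)"
proof (rule has_bochner_integral_nn_integral)
  show "(\<lambda>x. indicator {0<..} x * (real k * x^(k-1) * exp (-(a * x)))) \<in> borel_measurable lborel" by measurable
  show "AE x in lborel. 0 \<le> indicator {0<..} x * (real k * x^(k-1) * exp (-(a * x)))"
    by (auto split: split_indicator)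
  show "0 \<le> fact k / a^k" using a by simp
  have "(\<integral>\<^sup>+x. ennreal (indicator {0<..} x * (real k * x^(k-1) * exp (-(a * x)))) \<partial>lborel)
     = (\<integral>\<^sup>+x. ennreal (real k / a) * ennreal (erlang_density 0 a x * x ^ (k-1)) \<partial>lborel)"
  proof (rule nn_integral_cong_AE)
    show "AE x in lborel. ennreal (indicator {0<..} x * (real k * x^(k-1) * exp (-(a * x)))) =
        ennreal (real k / a) * ennreal (erlang_density 0 a x * x ^ (k-1))"
      using AE_lborel_singleton[of 0]
    proof eventually_elim
      case (elim x)
      show ?case
      proof (cases "x > 0")
        case True
        then have "indicator {0<..} x * (real k * x^(k-1) * exp (-(a * x))) = (real k / a) * (erlang_density 0 a x * x ^ (k-1))"
          using a by (simp add: erlang_density_def field_simps)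
        then show ?thesis using a True by (simp add: ennreal_mult'[symmetric] erlang_density_def)
      next
        case False
        with elim have "x < 0" by simp
        then show ?thesis by (simp add: erlang_density_def)
      qed
    qed
  qed
  also have "\<dots> = ennreal (real k / a) * (\<integral>\<^sup>+x. ennreal (erlang_density 0 a x * x ^ (k-1)) \<partial>lborel)"
    by (rule nn_integral_cmult) measurable
  also have "(\<integral>\<^sup>+x. ennreal (erlang_density 0 a x * x ^ (k-1)) \<partial>lborel) = fact (0 + (k-1)) / (fact 0 * a ^ (k-1))"
    by (rule nn_integral_erlang_ith_moment[OF a])
  also have "ennreal (real k / a) * ennreal (fact (0 + (k-1)) / (fact 0 * a ^ (k-1))) = ennreal (fact k / a^k)"
  proof -
    obtain m where m: "k = Suc m" using k by (cases k) auto
    have "real k / a * (fact (0 + (k-1)) / (fact 0 * a ^ (k-1))) = fact k / a^k"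
      unfolding m using a by (simp add: field_simps)
    then show ?thesis using a by (simp add: ennreal_mult'[symmetric])
  qed
  finally show "(\<integral>\<^sup>+x. ennreal (indicator {0<..} x * (real k * x^(k-1) * exp (-(a * x)))) \<partial>lborel) = ennreal (fact k / a^k)" .
qed

lemma summable_pentagonal_reciprocal_powers:
  assumes k: "k \<ge> 1"
  shows "summable (\<lambda>j. fact k / pent_lo j^k + fact k / pent_hi j^k)"
proof (rule summable_comparison_test'[where N=0])
  show "summable (\<lambda>j. 2 * fact k * (1 / (real j + 1)^2))"
    by (intro summable_mult summable_hurwitz) auto
  fix j
  have b: "1 / c^k \<le> 1 / (real j + 1)^2" if "c \<ge> (real j + 1)^2" for c
  proof -
    have c1: "c \<ge> 1" using that by (smt (verit) of_nat_0_le_iff one_le_power)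
    have "c \<le> c^k" using c1 k by (metis power_one_right power_increasing)
    then have "1 / c^k \<le> 1 / c" using c1 by (intro divide_left_mono) auto
    also have "\<dots> \<le> 1 / (real j + 1)^2" using that c1 by (intro divide_left_mono) (auto intro!: mult_pos_pos)
    finally show ?thesis .
  qed
  have "fact k / pent_lo j^k = fact k * (1 / pent_lo j^k)" "fact k / pent_hi j^k = fact k * (1 / pent_hi j^k)" by simp_all
  moreover have "fact k * (1 / pent_lo j^k) \<le> fact k * (1 / (real j + 1)^2)"
    by (intro mult_left_mono b pent_lo_ge_square) auto
  moreover have "fact k * (1 / pent_hi j^k) \<le> fact k * (1 / (real j + 1)^2)"
    by (intro mult_left_mono b pent_hi_ge_square) auto
  moreover have "0 \<le> fact k / pent_lo j^k + fact k / pent_hi j^k"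
    using pent_lo_ge[of j] pent_hi_ge[of j] by (intro add_nonneg_nonneg divide_nonneg_pos) auto
  ultimately show "norm (fact k / pent_lo j^k + fact k / pent_hi j^k) \<le> 2 * fact k * (1 / (real j + 1)^2)"
    by simp
qed

lemma has_bochner_integral_pentagonal_tail:
  assumes k: "k \<ge> 1"
  shows "has_bochner_integral lborel (\<lambda>x. indicator {0<..} x * (real k * x^(k-1) * (1 - euler_function (exp (-x)))))
           (\<Sum>j. (-1)^j * (fact k / pent_lo j^k + fact k / pent_hi j^k))"
proof -
  define g where "g c x = indicator {0<..} x * (real k * x^(k-1) * exp (-(c * x)))" for c x :: real
  define f where "f j x = (-1)^j * (g (pent_lo j) x + g (pent_hi j) x)" for j x
  have apos: "pent_lo j > 0" "pent_hi j > 0" for j using pent_lo_ge[of j] pent_hi_ge[of j] by linarith+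
  have gnn: "g c x \<ge> 0" for c x unfolding g_def by (auto split: split_indicator)
  have gi: "has_bochner_integral lborel (g (pent_lo j)) (fact k / pent_lo j^k)"
           "has_bochner_integral lborel (g (pent_hi j)) (fact k / pent_hi j^k)" for j
    unfolding g_def using has_bochner_integral_power_exp[OF apos(1) k] has_bochner_integral_power_exp[OF apos(2) k] by auto
  have fi: "has_bochner_integral lborel (f j) ((-1)^j * (fact k / pent_lo j^k + fact k / pent_hi j^k))" for j
    unfolding f_def by (intro has_bochner_integral_mult_right has_bochner_integral_add gi)
  have nf: "norm (f j x) = g (pent_lo j) x + g (pent_hi j) x" for j x
    unfolding f_def using gnn[of "pent_lo j" x] gnn[of "pent_hi j" x] by (simp add: abs_mult)
  have fni: "integral\<^sup>L lborel (\<lambda>x. norm (f j x)) = fact k / pent_lo j^k + fact k / pent_hi j^k" for j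
    unfolding nf by (intro has_bochner_integral_integral_eq has_bochner_integral_add gi)
  have int: "integrable lborel (f j)" for j using fi by (rule integrable.intros)
  have sumn: "summable (\<lambda>j. integral\<^sup>L lborel (\<lambda>x. norm (f j x)))"
    unfolding fni by (rule summable_pentagonal_reciprocal_powers[OF k])
  have sumx: "summable (\<lambda>j. norm (f j x))" for x
  proof (cases "x > 0")
    case False
    then show ?thesis unfolding nf g_def by simp
  next
    case True
    have "summable (\<lambda>j. 2 * (real k * x^(k-1)) * exp (-x) ^ (Suc j))"
      using True by (intro summable_mult summable_geometric_iff[THEN iffD2] summable_Suc_iff[THEN iffD2]) auto
    moreover have "norm (norm (f j x)) \<le> 2 * (real k * x^(k-1)) * exp (-x) ^ (Suc j)" for j
    proof -
      have "real k * x^(k-1) * (exp (-(pent_lo j * x)) + exp (-(pent_hi j * x))) \<le> real k * x^(k-1) * (2 * exp (-x) ^ (Suc j))"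
        using True by (intro mult_left_mono exp_pentagonal_le) auto
      then show ?thesis unfolding nf g_def using True gnn by (simp add: algebra_simps)
    qed
    ultimately show ?thesis by (rule summable_comparison_test'[where N=0])
  qed
  have sumf: "(\<Sum>j. f j x) = indicator {0<..} x * (real k * x^(k-1) * (1 - euler_function (exp (-x))))" for x
  proof (cases "x > 0")
    case False
    then show ?thesis unfolding f_def g_def by simp
  next
    case True
    have "(\<lambda>j. (real k * x^(k-1)) * ((-1)^j * (exp (-(pent_lo j * x)) + exp (-(pent_hi j * x))))) sums ((real k * x^(k-1)) * (1 - euler_function (exp (-x))))"
      by (intro sums_mult one_minus_euler_function_sums True)
    moreover have "f j x = (real k * x^(k-1)) * ((-1)^j * (exp (-(pent_lo j * x)) + exp (-(pent_hi j * x))))" for j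
      unfolding f_def g_def using True by (simp add: algebra_simps)
    ultimately show ?thesis using True by (simp add: sums_iff)
  qed
  have "(\<lambda>j. integral\<^sup>L lborel (f j)) sums (\<integral>x. (\<Sum>j. f j x) \<partial>lborel)"
    by (rule sums_integral[OF int _ sumn]) (rule AE_I2, rule sumx)
  moreover have "integrable lborel (\<lambda>x. \<Sum>j. f j x)"
    by (rule integrable_suminf[OF int _ sumn]) (rule AE_I2, rule sumx)
  moreover have "integral\<^sup>L lborel (f j) = (-1)^j * (fact k / pent_lo j^k + fact k / pent_hi j^k)" for j
    using fi by (rule has_bochner_integral_integral_eq)
  ultimately show ?thesis unfolding sumf by (simp add: sums_iff has_bochner_integral_iff)
qed

section \<open>The supremum of independent exponentials\<close>

text \<open>\<open>Sup\<close> of an unbounded set of reals is an unspecified constant, the same for every such set;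
  this makes the supremum measurable without any boundedness assumption.\<close>

lemma Sup_unbounded_real:
  fixes S :: "real set"
  assumes "\<not> bdd_above S"
  shows "Sup S = Sup (UNIV::real set)"
proof -
  have "(\<lambda>z. \<forall>x\<in>S. x \<le> z) = (\<lambda>z. \<forall>x\<in>(UNIV::real set). x \<le> z)"
  proof (rule ext)
    fix z
    have "\<not> (\<forall>x\<in>S. x \<le> z)" using assms unfolding bdd_above_def by auto
    moreover have "\<not> (\<forall>x\<in>(UNIV::real set). x \<le> z)" by (auto intro: exI[of _ "z+1"])
    ultimately show "(\<forall>x\<in>S. x \<le> z) = (\<forall>x\<in>(UNIV::real set). x \<le> z)" by blast
  qed
  then show ?thesis unfolding Sup_real_def by simp
qed

lemma bdd_above_iff_nat_bound:
  "bdd_above ((\<lambda>i. X i \<omega>) ` {1..}) \<longleftrightarrow> (\<exists>n::nat. \<forall>i\<in>{1::nat..}. X i \<omega> \<le> real n)"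
proof
  assume "bdd_above ((\<lambda>i. X i \<omega>) ` {1..})"
  then obtain B where B: "\<And>i. i \<in> {1..} \<Longrightarrow> X i \<omega> \<le> B" unfolding bdd_above_def by auto
  obtain n :: nat where "B \<le> real n" using real_arch_simple by blast
  with B show "\<exists>n::nat. \<forall>i\<in>{1::nat..}. X i \<omega> \<le> real n" by (metis order.trans)
next
  assume "\<exists>n::nat. \<forall>i\<in>{1::nat..}. X i \<omega> \<le> real n"
  then show "bdd_above ((\<lambda>i. X i \<omega>) ` {1..})" unfolding bdd_above_def by auto
qed

lemma borel_measurable_SUP_real:
  fixes X :: "nat \<Rightarrow> 'a \<Rightarrow> real"
  assumes Xm[measurable]: "\<And>i. i \<ge> 1 \<Longrightarrow> X i \<in> borel_measurable M"
  shows "(\<lambda>\<omega>. SUP i\<in>{1..}. X i \<omega>) \<in> borel_measurable M"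
proof -
  define B where "B \<omega> = (\<exists>n::nat. \<forall>i\<in>{1::nat..}. X i \<omega> \<le> real n)" for \<omega>
  have Bm[measurable]: "Measurable.pred M B" unfolding B_def by measurable
  define Xb where "Xb i \<omega> = (if B \<omega> then X i \<omega> else 0)" for i \<omega>
  have Xbm[measurable]: "Xb i \<in> borel_measurable M" if "i \<in> {1..}" for i
  proof -
    have Bs: "{\<omega>\<in>space M. B \<omega>} \<in> sets M" by measurable
    show ?thesis unfolding Xb_def using that Bs by (intro measurable_If Xm borel_measurable_const) auto
  qed
  have bddb: "bdd_above ((\<lambda>i. Xb i \<omega>) ` {1..})" for \<omega>
  proof (cases "B \<omega>")
    case True then show ?thesis unfolding Xb_def using bdd_above_iff_nat_bound[of X \<omega>] B_def by simp
  next
    case False then show ?thesis unfolding Xb_def by (auto simp: bdd_above_def)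
  qed
  have S: "(\<lambda>\<omega>. SUP i\<in>{1..}. Xb i \<omega>) \<in> borel_measurable M"
    by (rule borel_measurable_cSUP) (simp_all only: Xbm bddb countable_Collect, simp)
  have eq: "(SUP i\<in>{1..}. X i \<omega>) = (if B \<omega> then (SUP i\<in>{1..}. Xb i \<omega>) else Sup (UNIV::real set))" for \<omega>
  proof (cases "B \<omega>")
    case True then show ?thesis unfolding Xb_def by simp
  next
    case False
    then have "\<not> bdd_above ((\<lambda>i. X i \<omega>) ` {1..})" using bdd_above_iff_nat_bound[of X \<omega>] B_def by simp
    then show ?thesis using False by (simp add: Sup_unbounded_real)
  qed
  show ?thesis unfolding eq using S by measurable
qed

locale indep_exponentials = prob_space +
  fixes X :: "nat \<Rightarrow> 'a \<Rightarrow> real"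
  assumes X_indep: "indep_vars (\<lambda>_. borel) X {1..}"
    and X_distributed: "\<And>i. i \<ge> 1 \<Longrightarrow> distributed M lborel (X i) (exponential_density (real i))"
begin

definition max_exp :: "'a \<Rightarrow> real" where
  "max_exp \<omega> = (SUP i\<in>{1..}. X i \<omega>)"

lemma X_measurable[measurable]: "i \<ge> 1 \<Longrightarrow> X i \<in> borel_measurable M"
  using X_indep unfolding indep_vars_def2 by auto

lemma max_exp_measurable[measurable]: "max_exp \<in> borel_measurable M"
  unfolding max_exp_def by (rule borel_measurable_SUP_real) (use X_measurable in auto)

lemma AE_bdd_above:
  shows "AE \<omega> in M. bdd_above ((\<lambda>i. X i \<omega>) ` {1..})"
proof -
  define A where "A n = {\<omega>\<in>space M. 1 < X (Suc n) \<omega>}" for n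
  have Am[measurable]: "A n \<in> sets M" for n unfolding A_def by measurable
  have mA: "measure M (A n) = exp (-1) ^ (Suc n)" for n
  proof -
    have "measure M (A n) = exp (- 1 * real (Suc n))"
      unfolding A_def using exponential_distributedD_gt[OF X_distributed[of "Suc n"], of 1] by simp
    also have "\<dots> = exp (-1) ^ (Suc n)" by (subst exp_of_nat_mult[symmetric]) simp
    finally show ?thesis .
  qed
  have su: "summable (\<lambda>n. measure M (A n))" unfolding mA
    by (subst summable_Suc_iff) (simp add: summable_geometric_iff)
  have fi: "\<And>n. emeasure M (A n) < \<infinity>" by (simp add: emeasure_eq_measure)
  have "AE \<omega> in M. eventually (\<lambda>n. \<omega> \<in> space M - A n) sequentially"
    by (rule borel_cantelli_AE1[OF Am fi su])
  then show ?thesis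
  proof (rule AE_mp[OF _ AE_I2[OF impI]])
    fix \<omega> assume sp: "\<omega> \<in> space M" and ev: "eventually (\<lambda>n. \<omega> \<in> space M - A n) sequentially"
    then obtain N where N: "\<And>n. n \<ge> N \<Longrightarrow> \<omega> \<in> space M - A n" unfolding eventually_sequentially by auto
    have "(\<lambda>i. X i \<omega>) ` {1..} \<subseteq> (\<lambda>i. X i \<omega>) ` {1..N} \<union> {..1}"
    proof
      fix y assume "y \<in> (\<lambda>i. X i \<omega>) ` {1..}"
      then obtain i where i: "i \<ge> 1" "y = X i \<omega>" by auto
      show "y \<in> (\<lambda>i. X i \<omega>) ` {1..N} \<union> {..1}"
      proof (cases "i \<le> N")
        case True then show ?thesis using i by auto
      next
        case False
        then obtain n where n: "i = Suc n" "n \<ge> N" using i by (cases i) auto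
        then have "\<omega> \<notin> A n" using N by auto
        then have "X i \<omega> \<le> 1" using sp n unfolding A_def by auto
        then show ?thesis using i by auto
      qed
    qed
    moreover have "bdd_above ((\<lambda>i. X i \<omega>) ` {1..N} \<union> {..1})" by (simp add: bdd_above_finite)
    ultimately show "bdd_above ((\<lambda>i. X i \<omega>) ` {1..})" by (rule bdd_above_mono[rotated])
  qed
qed

lemma AE_nonneg:
  shows "AE \<omega> in M. \<forall>i\<in>{1..}. 0 \<le> X i \<omega>"
proof (rule AE_ball_countable')
  fix i :: nat assume "i \<in> {1..}"
  then have Di: "distributed M lborel (X i) (exponential_density (real i))" using X_distributed by simp
  show "AE \<omega> in M. 0 \<le> X i \<omega>"
    by (subst distributed_AE2[OF Di]) (auto simp: exponential_density_def erlang_density_def)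
qed simp

lemma prob_first_le:
  assumes x: "0 \<le> x"
  shows "prob {\<omega>\<in>space M. \<forall>i\<in>{1..n}. X i \<omega> \<le> x} = qpoch (exp (-x)) n"
proof (cases "n = 0")
  case True then show ?thesis by (simp add: prob_space)
next
  case False
  have ind_sets: "indep_sets (\<lambda>i. {X i -` S \<inter> space M | S. S \<in> sets borel}) {1..}"
    using X_indep unfolding indep_vars_def2 by simp
  have "{\<omega>\<in>space M. \<forall>i\<in>{1..n}. X i \<omega> \<le> x} = (\<Inter>i\<in>{1..n}. X i -` {..x} \<inter> space M)"
    using False by auto
  then have "prob {\<omega>\<in>space M. \<forall>i\<in>{1..n}. X i \<omega> \<le> x} = (\<Prod>i\<in>{1..n}. prob (X i -` {..x} \<inter> space M))"
    using False by (simp only:) (rule indep_setsD[OF ind_sets], auto intro!: exI[of _ "{..x}"])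
  also have "\<dots> = (\<Prod>i\<in>{1..n}. (1 - exp (-x) ^ i))"
  proof (rule prod.cong[OF refl])
    fix i assume i: "i \<in> {1..n}"
    have "X i -` {..x} \<inter> space M = {\<omega>\<in>space M. X i \<omega> \<le> x}" by auto
    then have "prob (X i -` {..x} \<inter> space M) = 1 - exp (- x * real i)"
      using exponential_distributedD_le[OF X_distributed[of i], of x] i x by simp
    also have "exp (- x * real i) = exp (-x) ^ i" by (subst exp_of_nat_mult[symmetric]) (simp add: mult.commute)
    finally show "prob (X i -` {..x} \<inter> space M) = 1 - exp (-x) ^ i" .
  qed
  finally show ?thesis unfolding qpoch_def .
qed

lemma prob_all_le:
  assumes x: "x > 0"
  shows "prob {\<omega>\<in>space M. \<forall>i\<in>{1..}. X i \<omega> \<le> x} = euler_function (exp (-x))"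
proof -
  define A where "A n = {\<omega>\<in>space M. \<forall>i\<in>{1..n}. X i \<omega> \<le> x}" for n
  have "(\<lambda>n. measure M (A n)) \<longlonglongrightarrow> measure M (\<Inter>n. A n)"
    by (rule finite_Lim_measure_decseq) (auto simp: A_def decseq_def)
  moreover have "(\<lambda>n. measure M (A n)) \<longlonglongrightarrow> euler_function (exp (-x))"
    unfolding A_def prob_first_le[OF less_imp_le[OF x]] euler_function_def by (rule qpoch_convergent) (use x in auto)
  moreover have "(\<Inter>n. A n) = {\<omega>\<in>space M. \<forall>i\<in>{1..}. X i \<omega> \<le> x}"
    unfolding A_def by auto (meson atLeastAtMost_iff order_refl)
  ultimately show ?thesis using LIMSEQ_unique by metis
qed

lemma AE_max_exp_nonneg: "AE \<omega> in M. 0 \<le> max_exp \<omega>"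
  using AE_bdd_above AE_nonneg
proof eventually_elim
  case (elim \<omega>)
  have "X 1 \<omega> \<le> max_exp \<omega>" unfolding max_exp_def by (rule cSUP_upper) (use elim in auto)
  moreover have "0 \<le> X 1 \<omega>" using elim by auto
  ultimately show ?case by simp
qed

lemma prob_max_exp_greater:
  assumes x: "x > 0"
  shows "prob {\<omega>\<in>space M. x < max_exp \<omega>} = 1 - euler_function (exp (-x))"
proof -
  define S where "S = {\<omega>\<in>space M. \<forall>i\<in>{1..}. X i \<omega> \<le> x}"
  have Sm: "S \<in> sets M" unfolding S_def by measurable
  have "prob {\<omega>\<in>space M. x < max_exp \<omega>} = prob (space M - S)"
  proof (rule finite_measure_eq_AE)
    show "AE \<omega> in M. (\<omega> \<in> {\<omega>\<in>space M. x < max_exp \<omega>}) = (\<omega> \<in> space M - S)"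
      using AE_bdd_above
    proof eventually_elim
      case (elim \<omega>)
      have "(max_exp \<omega> \<le> x) \<longleftrightarrow> (\<forall>i\<in>{1..}. X i \<omega> \<le> x)"
        unfolding max_exp_def by (rule cSUP_le_iff) (use elim in auto)
      then show ?case unfolding S_def by auto
    qed
  qed (use Sm in auto)
  also have "\<dots> = 1 - prob S" by (rule prob_compl[OF Sm])
  also have "prob S = euler_function (exp (-x))" unfolding S_def by (rule prob_all_le[OF x])
  finally show ?thesis .
qed

lemma has_bochner_integral_max_exp_power:
  assumes k: "k \<ge> 1"
  shows "has_bochner_integral M (\<lambda>\<omega>. max_exp \<omega> ^ k)
    (\<Sum>j. (-1)^j * (fact k / pent_lo j^k + fact k / pent_hi j^k))"
proof -
  define V where "V = (\<Sum>j. (-1)^j * (fact k / pent_lo j^k + fact k / pent_hi j^k))"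
  define h where "h x = indicator {0<..} x * (real k * x^(k-1) * (1 - euler_function (exp (-x))))" for x
  have tail_nonneg: "0 \<le> 1 - euler_function (exp (-x))" if "x > 0" for x
    using prob_max_exp_greater[OF that] by (metis measure_nonneg)
  have h_nonneg: "0 \<le> h x" for x unfolding h_def using tail_nonneg[of x] by (auto split: split_indicator)
  have h_integral: "has_bochner_integral lborel h V"
    unfolding h_def V_def by (rule has_bochner_integral_pentagonal_tail[OF k])
  then have V: "integral\<^sup>L lborel h = V" by (rule has_bochner_integral_integral_eq)
  have "(\<integral>\<^sup>+\<omega>. ennreal (max_exp \<omega> ^ k) \<partial>M) =
    (\<integral>\<^sup>+x. ennreal (real k * x^(k-1)) * indicator {0<..} x * emeasure M {\<omega>\<in>space M. x < max_exp \<omega>} \<partial>lborel)"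
    by (rule nn_integral_power_layer_cake[OF max_exp_measurable AE_max_exp_nonneg k])
  also have "\<dots> = (\<integral>\<^sup>+x. ennreal (h x) \<partial>lborel)"
  proof (rule nn_integral_cong)
    fix x :: real
    show "ennreal (real k * x^(k-1)) * indicator {0<..} x * emeasure M {\<omega>\<in>space M. x < max_exp \<omega>} = ennreal (h x)"
    proof (cases "x > 0")
      case True
      have "emeasure M {\<omega>\<in>space M. x < max_exp \<omega>} = ennreal (1 - euler_function (exp (-x)))"
        using prob_max_exp_greater[OF True] by (simp add: emeasure_eq_measure)
      then show ?thesis unfolding h_def using True tail_nonneg[OF True]
        by (simp add: ennreal_mult'[symmetric] ennreal_mult''[symmetric])
    next
      case False then show ?thesis unfolding h_def by simp
    qed
  qed
  also have "\<dots> = ennreal V"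
    using h_integral h_nonneg V by (subst nn_integral_eq_integral) (auto simp: has_bochner_integral_iff)
  finally have nn: "(\<integral>\<^sup>+\<omega>. ennreal (max_exp \<omega> ^ k) \<partial>M) = ennreal V" .
  have "0 \<le> V" unfolding V[symmetric] by (intro integral_nonneg_AE AE_I2 h_nonneg)
  then have "integrable M (\<lambda>\<omega>. max_exp \<omega> ^ k) \<and> integral\<^sup>L M (\<lambda>\<omega>. max_exp \<omega> ^ k) = V"
    using nn AE_max_exp_nonneg by (subst nn_integral_eq_integrable[symmetric]) auto
  then show ?thesis unfolding V_def by (simp add: has_bochner_integral_iff)
qed

lemma expectation_max_exp_power:
  assumes k: "k \<ge> 1"
  shows "integrable M (\<lambda>\<omega>. max_exp \<omega> ^ k)
    \<and> expectation (\<lambda>\<omega>. max_exp \<omega> ^ k) = fact k * ((-1)^k * moment_bracket k)"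
proof -
  have "(\<lambda>j. fact k * ((-1)^j * ((2/((real j+1)*(3*real j+2)))^k + (2/((real j+1)*(3*real j+4)))^k)))
      sums (fact k * ((-1)^k * moment_bracket k))"
    by (intro sums_mult sums_reciprocal_pentagonal_powers[OF k])
  moreover have "fact k * ((-1)^j * ((2/((real j+1)*(3*real j+2)))^k + (2/((real j+1)*(3*real j+4)))^k))
     = (-1)^j * (fact k / pent_lo j^k + fact k / pent_hi j^k)" for j
    unfolding pent_lo_eq pent_hi_eq by (simp add: power_divide algebra_simps)
  ultimately have "(\<Sum>j. (-1)^j * (fact k / pent_lo j^k + fact k / pent_hi j^k)) = fact k * ((-1)^k * moment_bracket k)"
    by (simp add: sums_iff)
  with has_bochner_integral_max_exp_power[OF k] show ?thesis
    by (simp add: has_bochner_integral_iff)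
qed

end

theorem theorem2:
  fixes P :: "'a measure" and X :: "nat \<Rightarrow> 'a \<Rightarrow> real" and k :: nat
  assumes "prob_space P"
    and "prob_space.indep_vars P (\<lambda>_. borel) X {1..}"
    and "\<And>i. i \<ge> 1 \<Longrightarrow> distributed P lborel (X i) (exponential_density (real i))"
    and "k \<ge> 1"
  shows "integrable P (\<lambda>\<omega>. (SUP i\<in>{1..}. X i \<omega>) ^ k)
    \<and> prob_space.expectation P (\<lambda>\<omega>. (SUP i\<in>{1..}. X i \<omega>) ^ k) =
      fact k * (-1) ^ k *
      ( - (6 ^ k) * (2 * pi / (3 * sqrt 3) - 1) * real ((2*k-2) choose (k-1))
        + (\<Sum>j=1..k div 2. 2 ^ (k+1) * real ((2*k-2*j-1) choose (k-1)) * 3 ^ (k-2*j)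
              * riemann_zeta (2*j) * (1 - 1 / 2 ^ (2*j-1)))
        + (\<Sum>j=2..k. real ((2*k-j-1) choose (k-1)) * 6 ^ (k-j)
              * ((-1) ^ j * (hurwitz_zeta j (1/3) - hurwitz_zeta j (5/6))
                 + hurwitz_zeta j (2/3) - hurwitz_zeta j (1/6) + 6 ^ j)))"
proof -
  interpret indep_exponentials P X
    using assms(1-3) by (intro indep_exponentials.intro indep_exponentials_axioms.intro)
  show ?thesis
    using expectation_max_exp_power[OF assms(4)]
    unfolding max_exp_def moment_bracket_def by (simp add: mult.assoc)
qed

end
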